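(* Let $\ell\in\mathbb{N}$, $h\in\bigwedge(V_{2\ell}^* )$, let $G$ be an Eulerian graph and $\phi:E(G)\to[\ell]$. Then $s_{h,\phi}(G,\omega,\kappa)$ has the same value for all Eulerian orientations $\omega$ of $G$ and all local orderings $\kappa$ compatible with $\omega$. (Consequently, since $s_h((G,\omega,\kappa))=\sum_{\phi:E(G)\to[\ell]}s_{h,\phi}(G,\omega,\kappa)$, the same holds for $s_h((G,\omega,\kappa))$.)
   Context: Setup: $V_{2\ell}=\mathbb{C}^{2\ell}$ with standard basis $e_1,\dots,e_{2\ell}$; $f_i=-e_{i+\ell}$ for $i\le\ell$, $f_i=e_{i-\ell}$ for $i>\ell$. $\bigwedge(V_{2\ell}^* )=\bigoplus_{n=0}^{2\ell}\bigwedge^n(V_{2\ell}^* )$, and $h$ applied to an $n$-fold tensor means its skew-symmetric component $h^n$ applied to it. Graphs may have loops and multiple edges; Eulerian means every vertex has even degree. An Eulerian orientation $\omega$ makes in-degree equal out-degree at each vertex (a loop gives one incoming and one outgoing arc). A compatible local ordering $\kappa$ consists at each vertex $v$ of degree $d(v)$ of bijections $\kappa_v^-:\delta^-(v)\to\{1,3,\dots,d(v)-1\}$ and $\kappa_v^+:\delta^+(v)\to\{2,4,\dots,d(v)\}$; $\kappa_v^{-1}(i)$ is the arc at $v$ with label $i$. The $\kappa$-circuits are the closed walks $(v_1,a_1,\dots,a_i,v_i,a_{i+1},\dots,v_1)$ with $\kappa^-_{v_i}(a_i)+1=\kappa^+_{v_i}(a_{i+1})$ into which $\kappa$ decomposes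 the edge set; $c(G,\kappa)$ is their number. For $\phi:E(G)\to[\ell]$, $s_{h,\phi}(G,\omega,\kappa)=(-1)^{c(G,\kappa)}\sum_{\psi:E(G)\to\{0,\ell\}}\prod_{v\in V(G)} h\big(\bigotimes_{i=1,3,\dots,d(v)-1} e_{(\phi+\psi)(\kappa_v^{-1}(i))}\otimes f_{(\phi+\psi)(\kappa_v^{-1}(i+1))}\big)$, and $s_h((G,\omega,\kappa))$ is the same expression with the sum over all $\phi':E(G)\to[2\ell]$ in place of $\phi+\psi$. *)

theory Defs
  imports Complex_Main "HOL-Library.FuncSet"
begin

text \<open>An element h of the exterior algebra of the dual of V_(2l) is represented by its
values on tuples of standard basis vectors: H xs = h^n(e_(xs!0), ..., e_(xs!(n-1)))
where n = length xs.  Each component h^n is a skew-symmetric multilinear form,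
hence determined by these values, and the values are alternating under swapping
two positions.  (Components with n > 2l vanish automatically.)\<close>

definition alt_elem :: "nat \<Rightarrow> (nat list \<Rightarrow> complex) \<Rightarrow> bool" where
  "alt_elem l H \<longleftrightarrow>
     (\<forall>xs i j. set xs \<subseteq> {1..2*l} \<longrightarrow> i < length xs \<longrightarrow> j < length xs \<longrightarrow> i \<noteq> j \<longrightarrow>
        H (xs[i := xs ! j, j := xs ! i]) = - H xs)"

text \<open>f_i = - e_(i+l) for i \<le> l, f_i = e_(i-l) for i > l.\<close>
definition f_idx :: "nat \<Rightarrow> nat \<Rightarrow> nat" where
  "f_idx l i = (if i \<le> l then i + l else i - l)"

definition f_sgn :: "nat \<Rightarrow> nat \<Rightarrow> complex" where
  "f_sgn l i = (if i \<le> l then -1 else 1)"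

text \<open>A graph: finite vertex set V, finite edge set E, each edge e has an (unordered)
pair of ends given by ends e (a loop has equal ends); multiple edges allowed.\<close>
definition graph :: "'v set \<Rightarrow> 'e set \<Rightarrow> ('e \<Rightarrow> 'v \<times> 'v) \<Rightarrow> bool" where
  "graph V E ends \<longleftrightarrow> finite V \<and> finite E \<and> (\<forall>e\<in>E. fst (ends e) \<in> V \<and> snd (ends e) \<in> V)"

text \<open>degree: a loop counts twice\<close>
definition deg :: "'e set \<Rightarrow> ('e \<Rightarrow> 'v \<times> 'v) \<Rightarrow> 'v \<Rightarrow> nat" where
  "deg E ends v = card {e\<in>E. fst (ends e) = v} + card {e\<in>E. snd (ends e) = v}"

definition eulerian :: "'v set \<Rightarrow> 'e set \<Rightarrow> ('e \<Rightarrow> 'v \<times> 'v) \<Rightarrow> bool" where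
  "eulerian V E ends \<longleftrightarrow> (\<forall>v\<in>V. even (deg E ends v))"

definition orientation :: "'e set \<Rightarrow> ('e \<Rightarrow> 'v \<times> 'v) \<Rightarrow> ('e \<Rightarrow> 'v \<times> 'v) \<Rightarrow> bool" where
  "orientation E ends \<omega> \<longleftrightarrow> (\<forall>e\<in>E. \<omega> e = ends e \<or> \<omega> e = prod.swap (ends e))"

definition in_arcs :: "'e set \<Rightarrow> ('e \<Rightarrow> 'v \<times> 'v) \<Rightarrow> 'v \<Rightarrow> 'e set" where
  "in_arcs E \<omega> v = {e\<in>E. snd (\<omega> e) = v}"

definition out_arcs :: "'e set \<Rightarrow> ('e \<Rightarrow> 'v \<times> 'v) \<Rightarrow> 'v \<Rightarrow> 'e set" where
  "out_arcs E \<omega> v = {e\<in>E. fst (\<omega> e) = v}"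

definition eulerian_orientation ::
  "'v set \<Rightarrow> 'e set \<Rightarrow> ('e \<Rightarrow> 'v \<times> 'v) \<Rightarrow> ('e \<Rightarrow> 'v \<times> 'v) \<Rightarrow> bool" where
  "eulerian_orientation V E ends \<omega> \<longleftrightarrow> orientation E ends \<omega> \<and>
     (\<forall>v\<in>V. card (in_arcs E \<omega> v) = card (out_arcs E \<omega> v))"

definition compatible_ordering ::
  "'v set \<Rightarrow> 'e set \<Rightarrow> ('e \<Rightarrow> 'v \<times> 'v) \<Rightarrow> ('e \<Rightarrow> 'v \<times> 'v)
    \<Rightarrow> ('v \<Rightarrow> 'e \<Rightarrow> nat) \<Rightarrow> ('v \<Rightarrow> 'e \<Rightarrow> nat) \<Rightarrow> bool" where
  "compatible_ordering V E ends \<omega> km kp \<longleftrightarrow>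
     (\<forall>v\<in>V. bij_betw (km v) (in_arcs E \<omega> v) {i. odd i \<and> i < deg E ends v}
          \<and> bij_betw (kp v) (out_arcs E \<omega> v) {i. even i \<and> 2 \<le> i \<and> i \<le> deg E ends v})"

definition arc_lab ::
  "'e set \<Rightarrow> ('e \<Rightarrow> 'v \<times> 'v) \<Rightarrow> ('v \<Rightarrow> 'e \<Rightarrow> nat) \<Rightarrow> ('v \<Rightarrow> 'e \<Rightarrow> nat) \<Rightarrow> 'v \<Rightarrow> nat \<Rightarrow> 'e" where
  "arc_lab E \<omega> km kp v i =
     (if odd i then (THE e. e \<in> in_arcs E \<omega> v \<and> km v e = i)
      else (THE e. e \<in> out_arcs E \<omega> v \<and> kp v e = i))"

definition next_arc ::
  "'e set \<Rightarrow> ('e \<Rightarrow> 'v \<times> 'v) \<Rightarrow> ('v \<Rightarrow> 'e \<Rightarrow> nat) \<Rightarrow> ('v \<Rightarrow> 'e \<Rightarrow> nat) \<Rightarrow> 'e \<Rightarrow> 'e" where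
  "next_arc E \<omega> km kp a = arc_lab E \<omega> km kp (snd (\<omega> a)) (km (snd (\<omega> a)) a + 1)"

definition circuits ::
  "'e set \<Rightarrow> ('e \<Rightarrow> 'v \<times> 'v) \<Rightarrow> ('v \<Rightarrow> 'e \<Rightarrow> nat) \<Rightarrow> ('v \<Rightarrow> 'e \<Rightarrow> nat) \<Rightarrow> 'e set set" where
  "circuits E \<omega> km kp = {{(next_arc E \<omega> km kp ^^ n) a | n. True} | a. a \<in> E}"

definition num_circuits ::
  "'e set \<Rightarrow> ('e \<Rightarrow> 'v \<times> 'v) \<Rightarrow> ('v \<Rightarrow> 'e \<Rightarrow> nat) \<Rightarrow> ('v \<Rightarrow> 'e \<Rightarrow> nat) \<Rightarrow> nat" where
  "num_circuits E \<omega> km kp = card (circuits E \<omega> km kp)"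

text \<open>h( e_(p(kappa^-1 1)) (x) f_(p(kappa^-1 2)) (x) ... (x) e_(p(kappa^-1 (d-1))) (x) f_(p(kappa^-1 d)) )\<close>
definition local_val ::
  "nat \<Rightarrow> (nat list \<Rightarrow> complex) \<Rightarrow> 'e set \<Rightarrow> ('e \<Rightarrow> 'v \<times> 'v) \<Rightarrow> ('e \<Rightarrow> 'v \<times> 'v)
    \<Rightarrow> ('v \<Rightarrow> 'e \<Rightarrow> nat) \<Rightarrow> ('v \<Rightarrow> 'e \<Rightarrow> nat) \<Rightarrow> ('e \<Rightarrow> nat) \<Rightarrow> 'v \<Rightarrow> complex" where
  "local_val l H E ends \<omega> km kp p v =
     (let m = deg E ends v div 2;
          a = (\<lambda>j. p (arc_lab E \<omega> km kp v (2*j+1)));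
          b = (\<lambda>j. p (arc_lab E \<omega> km kp v (2*j+2)))
      in (\<Prod>j<m. f_sgn l (b j)) * H (concat (map (\<lambda>j. [a j, f_idx l (b j)]) [0..<m])))"

definition s_phi ::
  "nat \<Rightarrow> (nat list \<Rightarrow> complex) \<Rightarrow> 'v set \<Rightarrow> 'e set \<Rightarrow> ('e \<Rightarrow> 'v \<times> 'v) \<Rightarrow> ('e \<Rightarrow> nat)
    \<Rightarrow> ('e \<Rightarrow> 'v \<times> 'v) \<Rightarrow> ('v \<Rightarrow> 'e \<Rightarrow> nat) \<Rightarrow> ('v \<Rightarrow> 'e \<Rightarrow> nat) \<Rightarrow> complex" where
  "s_phi l H V E ends \<phi> \<omega> km kp =
     (-1) ^ num_circuits E \<omega> km kp *
     (\<Sum>\<psi>\<in>PiE E (\<lambda>_. {0, l}). \<Prod>v\<in>V. local_val l H E ends \<omega> km kp (\<lambda>e. \<phi> e + \<psi> e) v)"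

definition s_h ::
  "nat \<Rightarrow> (nat list \<Rightarrow> complex) \<Rightarrow> 'v set \<Rightarrow> 'e set \<Rightarrow> ('e \<Rightarrow> 'v \<times> 'v)
    \<Rightarrow> ('e \<Rightarrow> 'v \<times> 'v) \<Rightarrow> ('v \<Rightarrow> 'e \<Rightarrow> nat) \<Rightarrow> ('v \<Rightarrow> 'e \<Rightarrow> nat) \<Rightarrow> complex" where
  "s_h l H V E ends \<omega> km kp =
     (-1) ^ num_circuits E \<omega> km kp *
     (\<Sum>\<phi>'\<in>PiE E (\<lambda>_. {1..2*l}). \<Prod>v\<in>V. local_val l H E ends \<omega> km kp \<phi>' v)"

end

theory Submission
  imports Defs "HOL-Combinatorics.Cycles" "HOL-Combinatorics.Orbits"
begin

text \<open>For a fixed colouring p of the edges by 1..2l, the corresponding summand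
  (-1)^c(G,\<kappa>) times the product of the local factors h(\<dots>) does not depend on (\<omega>, \<kappa>).

  For a fixed orientation, exchanging two labels at one vertex composes the successor permutation
  of the arcs with a transposition, which changes the number of \<kappa>-circuits by one modulo 2, and
  it transposes two arguments of the alternating form at that vertex; the two signs cancel. Since
  such exchanges connect any two compatible orderings, the summand is independent of \<kappa>.

  For two Eulerian orientations, choose orderings in which at every vertex the reversed arcs carry
  the smallest labels and a reversed arc keeps its rank. Then both orderings have the same
  circuits (those through reversed arcs are traversed backwards), and recolouring each reversed arc
  by i \<mapsto> i \<plusminus> l turns the summand for \<omega>1 into the one for \<omega>2: every reversed arc contributes
  one sign through f_i = \<plusminus>e_(i\<plusminus>l) and one exchange of an (e, f) pair of arguments at its head.
  The recolouring permutes the colourings summed over in s_h and in s_(h,\<phi>).\<close>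

section \<open>Orbits and the sign of a permutation\<close>

definition orbit_from :: "('a \<Rightarrow> 'a) \<Rightarrow> 'a \<Rightarrow> 'a set" where
  "orbit_from f a = range (\<lambda>n. (f ^^ n) a)"

lemma self_in_orbit_from: "a \<in> orbit_from f a"
  unfolding orbit_from_def by (metis funpow_0 rangeI)

lemma funpow_in_orbit_from: "(f ^^ n) a \<in> orbit_from f a"
  unfolding orbit_from_def by simp

lemma orbit_from_subset:
  assumes "b \<in> orbit_from f a"
  shows "orbit_from f b \<subseteq> orbit_from f a"
proof
  fix x assume "x \<in> orbit_from f b"
  then obtain i n where "b = (f ^^ i) a" "x = (f ^^ n) b"
    using assms unfolding orbit_from_def by auto
  then have "x = (f ^^ (n + i)) a" by (simp add: funpow_add)
  then show "x \<in> orbit_from f a" by (simp add: funpow_in_orbit_from)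
qed

lemma orbit_from_eq_if_mem:
  assumes "permutation p" "b \<in> orbit_from p a"
  shows "orbit_from p b = orbit_from p a"
proof
  show "orbit_from p b \<subseteq> orbit_from p a" using orbit_from_subset[OF assms(2)] .
  obtain i where i: "b = (p ^^ i) a" using assms(2) unfolding orbit_from_def by auto
  obtain n where n: "p ^^ n = id" "0 < n" using permutation_is_nilpotent[OF assms(1)] by blast
  have "(p ^^ (n * i - i)) b = (p ^^ (n * i - i + i)) a" unfolding i by (simp add: funpow_add)
  also have "n * i - i + i = n * i" using n(2) by simp
  also have "(p ^^ (n * i)) a = a" by (simp add: funpow_mult[symmetric] n(1))
  finally show "orbit_from p a \<subseteq> orbit_from p b"
    by (metis orbit_from_subset funpow_in_orbit_from)
qed

lemma funpow_cong_on:
  assumes "\<forall>x\<in>D. f x = g x" "f ` D \<subseteq> D" "a \<in> D"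
  shows "(f ^^ n) a = (g ^^ n) a \<and> (f ^^ n) a \<in> D"
  using assms by (induction n) auto

lemma orbit_from_cong_on:
  assumes "\<forall>x\<in>D. f x = g x" "f ` D \<subseteq> D" "a \<in> D"
  shows "orbit_from f a = orbit_from g a"
  using funpow_cong_on[OF assms] unfolding orbit_from_def by (intro image_cong) auto

lemma permutes_perm_restrict:
  assumes "finite D" "f ` D \<subseteq> D" "inj_on f D"
  shows "perm_restrict f D permutes D"
proof (rule bij_imp_permutes)
  show "bij_betw (perm_restrict f D) D D"
    using assms endo_inj_surj[OF assms]
    by (auto simp: bij_betw_def inj_on_def perm_restrict_def image_iff)
qed (simp add: perm_restrict_def)

lemma orbit_from_perm_restrict:
  "f ` D \<subseteq> D \<Longrightarrow> a \<in> D \<Longrightarrow> orbit_from (perm_restrict f D) a = orbit_from f a"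
  by (rule orbit_from_cong_on) (auto simp: perm_restrict_def)

lemma orbit_from_sym:
  assumes "finite D" "f ` D \<subseteq> D" "inj_on f D" "a \<in> D" "b \<in> orbit_from f a"
  shows "a \<in> orbit_from f b"
proof -
  have perm: "permutation (perm_restrict f D)"
    using permutes_perm_restrict[OF assms(1-3)] assms(1) permutation_permutes by blast
  have "b \<in> D" using funpow_cong_on[of D f f a] assms(2,4,5) unfolding orbit_from_def by auto
  then show ?thesis
    using orbit_from_eq_if_mem[OF perm] assms(2,4,5) self_in_orbit_from
    by (metis orbit_from_perm_restrict)
qed

lemma orbit_from_left_inverse:
  assumes "finite D" "f ` D \<subseteq> D" "\<forall>x\<in>D. g (f x) = x" "a \<in> D"
  shows "orbit_from f a = orbit_from g a"
proof -
  have inj: "inj_on f D" by (rule inj_on_inverseI[of D g]) (use assms(3) in auto)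
  have fD: "f ` D = D" by (rule endo_inj_surj[OF assms(1,2) inj])
  have gD: "g ` D \<subseteq> D"
  proof
    fix y assume "y \<in> g ` D"
    then obtain z where "z \<in> D" "y = g (f z)" using fD by (metis imageE)
    then show "y \<in> D" using assms(3) by simp
  qed
  have fg: "\<forall>x\<in>D. f (g x) = x" using fD assms(3) by force
  have injg: "inj_on g D" by (rule inj_on_inverseI[of D f]) (use fg in auto)
  have sub: "orbit_from g' a \<subseteq> orbit_from f' a"
    if "f' ` D \<subseteq> D" "g' ` D \<subseteq> D" "inj_on f' D" "\<forall>x\<in>D. f' (g' x) = x" for f' g'
  proof
    fix x assume "x \<in> orbit_from g' a"
    then obtain k where x: "x = (g' ^^ k) a" unfolding orbit_from_def by auto
    have "(f' ^^ k) ((g' ^^ k) a) = a"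
    proof (induction k)
      case (Suc k)
      have "(g' ^^ k) a \<in> D" using funpow_cong_on[of D g' g' a k] that(2) assms(4) by simp
      have "(f' ^^ Suc k) ((g' ^^ Suc k) a) = (f' ^^ k) (f' (g' ((g' ^^ k) a)))"
        by (metis comp_apply funpow.simps(2) funpow_Suc_right)
      then show ?case using Suc that(4) \<open>(g' ^^ k) a \<in> D\<close> by simp
    qed simp
    then have "a \<in> orbit_from f' x" unfolding x by (metis funpow_in_orbit_from)
    moreover have "x \<in> D" using funpow_cong_on[of D g' g' a k] that(2) assms(4) x by simp
    ultimately show "x \<in> orbit_from f' a" using orbit_from_sym[OF assms(1) that(1,3)] by blast
  qed
  show ?thesis using sub[OF assms(2) gD inj fg] sub[OF gD assms(2) injg assms(3)] by blast
qed

lemma sign_cycle_of_list: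
  "distinct cs \<Longrightarrow> sign (cycle_of_list cs) = (-1) ^ (length cs - 1)"
proof (induction cs rule: cycle_of_list.induct)
  case (1 i j cs)
  have "sign (cycle_of_list (i # j # cs)) = sign (transpose i j \<circ> cycle_of_list (j # cs))"
    by (simp only: cycle_of_list.simps)
  also have "\<dots> = sign (transpose i j) * sign (cycle_of_list (j # cs))"
    by (rule sign_compose[OF permutation_swap_id permutation_of_cycle])
  also have "\<dots> = (-1) * (-1) ^ (length (j # cs) - 1)"
    using 1 by (simp add: sign_swap_id)
  finally show ?case by (simp del: cycle_of_list.simps)
qed simp_all

lemma orbit_from_eq_support: "permutation p \<Longrightarrow> orbit_from p s = set (support p s)"
  unfolding orbit_from_def support_set ..

lemma orbit_from_subset_permutes: "p permutes S \<Longrightarrow> s \<in> S \<Longrightarrow> orbit_from p s \<subseteq> S"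
  unfolding orbit_from_def by (auto simp: permutes_in_image[OF permutes_funpow])

lemma permutes_image_diff_orbit_from:
  assumes "p permutes S" "permutation p"
  shows "p ` (S - orbit_from p s) \<subseteq> S - orbit_from p s"
proof
  fix y assume "y \<in> p ` (S - orbit_from p s)"
  then obtain x where x: "x \<in> S" "x \<notin> orbit_from p s" "y = p x" by auto
  have "y \<in> orbit_from p x" unfolding x(3) by (metis funpow_in_orbit_from funpow_simps_right(2) o_apply funpow_0)
  then have "y \<notin> orbit_from p s"
    using x(2) orbit_from_eq_if_mem[OF assms(2)] self_in_orbit_from by metis
  moreover have "y \<in> S" using x assms(1) permutes_in_image by fastforce
  ultimately show "y \<in> S - orbit_from p s" by blast
qed

lemma cycle_comp_perm_restrict_diff_orbit:
  assumes "p permutes S" "permutation p"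
  shows "cycle_of_list (support p s) \<circ> perm_restrict p (S - orbit_from p s) = p"
proof
  fix a
  consider "a \<in> S - orbit_from p s" | "a \<in> orbit_from p s" | "a \<notin> S" "a \<notin> orbit_from p s"
    by blast
  then show "(cycle_of_list (support p s) \<circ> perm_restrict p (S - orbit_from p s)) a = p a"
  proof cases
    case 1
    then have "p a \<notin> set (support p s)"
      using permutes_image_diff_orbit_from[OF assms] orbit_from_eq_support[OF assms(2)] by blast
    then have "cycle_of_list (support p s) (p a) = p a" by (rule id_outside_supp)
    then show ?thesis using 1 by (simp add: perm_restrict_def)
  next
    case 2
    then show ?thesis using cycle_restrict[OF assms(2)] orbit_from_eq_support[OF assms(2)]
      by (simp add: perm_restrict_def)
  next
    case 3
    then have "a \<notin> set (support p s)" using orbit_from_eq_support[OF assms(2)] by simp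
    then have "cycle_of_list (support p s) a = a" by (rule id_outside_supp)
    then show ?thesis using 3 assms(1) by (simp add: perm_restrict_def permutes_not_in)
  qed
qed

lemma orbits_insert_orbit_from:
  assumes "permutation p" "s \<in> S"
  shows "orbit_from p ` S = insert (orbit_from p s) (orbit_from p ` (S - orbit_from p s))"
    and "orbit_from p s \<notin> orbit_from p ` (S - orbit_from p s)"
proof -
  have "orbit_from p a = orbit_from p s" if "a \<in> orbit_from p s" for a
    using orbit_from_eq_if_mem[OF assms(1) that] .
  then show "orbit_from p ` S = insert (orbit_from p s) (orbit_from p ` (S - orbit_from p s))"
    using assms(2) by (auto simp: image_iff)
  show "orbit_from p s \<notin> orbit_from p ` (S - orbit_from p s)"
    using self_in_orbit_from by (metis Diff_iff imageE)
qed

lemma permutes_perm_restrict_diff_orbit_from: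
  assumes "p permutes S" "finite S"
  shows "perm_restrict p (S - orbit_from p s) permutes (S - orbit_from p s)"
proof -
  have perm: "permutation p" using assms permutation_permutes by blast
  show ?thesis
    unfolding orbit_from_eq_support[OF perm] perm_restrict_def[abs_def] by (rule semidecomposition[OF assms])
qed

lemma sign_split_orbit_from:
  assumes "p permutes S" "finite S"
  shows "sign p = (-1) ^ (card (orbit_from p s) - 1) * sign (perm_restrict p (S - orbit_from p s))"
proof -
  have perm: "permutation p" using assms permutation_permutes by blast
  have restrict: "permutation (perm_restrict p (S - orbit_from p s))"
    using permutes_perm_restrict_diff_orbit_from[OF assms] assms(2) by (auto simp: permutation_permutes)
  have "sign p = sign (cycle_of_list (support p s) \<circ> perm_restrict p (S - orbit_from p s))"
    using cycle_comp_perm_restrict_diff_orbit[OF assms(1) perm] by simp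
  also have "\<dots> = sign (cycle_of_list (support p s)) * sign (perm_restrict p (S - orbit_from p s))"
    by (rule sign_compose[OF permutation_of_cycle restrict])
  also have "sign (cycle_of_list (support p s)) = (-1) ^ (card (orbit_from p s) - 1)"
    unfolding orbit_from_eq_support[OF perm] distinct_card[OF cycle_of_permutation[OF perm]]
    by (rule sign_cycle_of_list[OF cycle_of_permutation[OF perm]])
  finally show ?thesis .
qed

text \<open>Removing one cycle of length n multiplies the left side by (-1)^n, and the sign and the
  orbit count on the right by (-1)^(n-1) and -1.\<close>
lemma card_parity_eq_sign_times_orbits_parity:
  assumes "p permutes S" "finite S"
  shows "(-1::int) ^ card S = sign p * (-1) ^ card (orbit_from p ` S)"
  using assms
proof (induction "card S" arbitrary: S p rule: less_induct)
  case less
  show ?case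
  proof (cases "S = {}")
    case True
    then show ?thesis using less(2) by simp
  next
    case False
    then obtain s where s: "s \<in> S" by blast
    have perm: "permutation p" using less(2,3) permutation_permutes by blast
    define C where "C = orbit_from p s"
    define q where "q = perm_restrict p (S - C)"
    have CS: "C \<subseteq> S" unfolding C_def by (rule orbit_from_subset_permutes[OF less(2) s])
    have sC: "s \<in> C" unfolding C_def by (rule self_in_orbit_from)
    have finC: "finite C" using CS less(3) finite_subset by blast
    have qp: "q permutes (S - C)"
      unfolding q_def C_def by (rule permutes_perm_restrict_diff_orbit_from[OF less(2,3)])
    have IH: "(-1::int) ^ card (S - C) = sign q * (-1) ^ card (orbit_from q ` (S - C))"
    proof -
      have "card (S - C) < card S" using sC s less(3) by (intro psubset_card_mono) auto
      then show ?thesis using less(1)[OF _ qp] less(3) by simp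
    qed
    have "orbit_from q ` (S - C) = orbit_from p ` (S - C)"
      using orbit_from_perm_restrict[OF permutes_image_diff_orbit_from[OF less(2) perm]]
      unfolding q_def C_def by simp
    then have orbits: "card (orbit_from p ` S) = Suc (card (orbit_from q ` (S - C)))"
      using orbits_insert_orbit_from[OF perm s] less(3) unfolding C_def by simp
    have sp: "sign p = (-1) ^ (card C - 1) * sign q"
      unfolding C_def q_def by (rule sign_split_orbit_from[OF less(2,3)])
    obtain k where k: "card C = Suc k" using sC finC by (metis card_0_eq empty_iff not0_implies_Suc)
    have "card S = card C + card (S - C)"
      using card_Diff_subset[OF finC CS] card_mono[OF less(3) CS] by simp
    then have "(-1::int) ^ card S = (-1) ^ Suc k * (-1) ^ card (S - C)" by (simp add: k power_add)
    also have "\<dots> = (-1) ^ Suc k * (sign q * (-1) ^ card (orbit_from q ` (S - C)))" by (simp only: IH)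
    also have "\<dots> = sign p * (-1) ^ card (orbit_from p ` S)"
      unfolding sp orbits k by (simp add: mult_ac)
    finally show ?thesis .
  qed
qed

lemma orbits_parity_comp_transpose:
  assumes "p permutes S" "finite S" "a \<in> S" "b \<in> S" "a \<noteq> b"
    and "q = p \<circ> transpose a b \<or> q = transpose a b \<circ> p"
  shows "(-1::complex) ^ card (orbit_from q ` S) = - ((-1) ^ card (orbit_from p ` S))"
proof -
  have qp: "q permutes S"
    using assms(6) permutes_compose[OF permutes_swap_id[OF assms(3,4)] assms(1)]
      permutes_compose[OF assms(1) permutes_swap_id[OF assms(3,4)]] by blast
  have perm: "permutation p" using assms(1,2) permutation_permutes by blast
  have sq: "sign q = - sign p"
    using assms(6)
  proof
    assume "q = p \<circ> transpose a b"
    then show ?thesis using assms(5) by (simp add: sign_compose[OF perm permutation_swap_id] sign_swap_id)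
  next
    assume "q = transpose a b \<circ> p"
    then show ?thesis using assms(5) by (simp add: sign_compose[OF permutation_swap_id perm] sign_swap_id)
  qed
  define x where "x = (-1::int) ^ card (orbit_from p ` S)"
  define y where "y = (-1::int) ^ card (orbit_from q ` S)"
  have "sign p * x = sign q * y"
    using card_parity_eq_sign_times_orbits_parity[OF assms(1,2)]
      card_parity_eq_sign_times_orbits_parity[OF qp assms(2)] unfolding x_def y_def by simp
  then have "sign p * (x + y) = 0" unfolding sq by (simp add: algebra_simps)
  moreover have "sign p \<noteq> 0" using sign_cases[of p] by auto
  ultimately have "y = - x" by (simp add: add_eq_0_iff)
  then have "of_int y = (of_int (- x) :: complex)" by (rule arg_cong)
  then show ?thesis unfolding x_def y_def by simp
qed

section \<open>Arguments of alternating forms\<close>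

definition interleave :: "(nat \<Rightarrow> 'a) \<Rightarrow> (nat \<Rightarrow> 'a) \<Rightarrow> nat \<Rightarrow> 'a list" where
  "interleave A B m = map (\<lambda>k. if even k then A (k div 2) else B (k div 2)) [0..<2*m]"

lemma concat_map_pair_eq_interleave: "concat (map (\<lambda>j. [A j, B j]) [0..<m]) = interleave A B m"
proof (induction m)
  case (Suc m)
  have "interleave A B (Suc m) = interleave A B m @ [A m, B m]"
    by (simp add: interleave_def)
  then show ?case using Suc by simp
qed (simp add: interleave_def)

lemma length_interleave [simp]: "length (interleave A B m) = 2 * m"
  by (simp add: interleave_def)

lemma nth_interleave:
  "k < 2 * m \<Longrightarrow> interleave A B m ! k = (if even k then A (k div 2) else B (k div 2))"
  by (simp add: interleave_def)

lemma set_interleave_subset: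
  "(\<And>j. j < m \<Longrightarrow> A j \<in> R \<and> B j \<in> R) \<Longrightarrow> set (interleave A B m) \<subseteq> R"
  by (auto simp: interleave_def)

lemma interleave_cong:
  "(\<And>j. j < m \<Longrightarrow> A j = A' j) \<Longrightarrow> (\<And>j. j < m \<Longrightarrow> B j = B' j) \<Longrightarrow>
    interleave A B m = interleave A' B' m"
  unfolding interleave_def by (rule map_cong) auto

lemma interleave_transpose_fst:
  assumes "i < m" "j < m"
  shows "interleave (A \<circ> transpose i j) B m =
    (interleave A B m)[2*i := interleave A B m ! (2*j), 2*j := interleave A B m ! (2*i)]"
proof (rule nth_equalityI)
  fix k assume "k < length (interleave (A \<circ> transpose i j) B m)"
  then have k: "k < 2 * m" by simp
  have "even k \<Longrightarrow> k \<noteq> 2 * i \<Longrightarrow> k div 2 \<noteq> i" "even k \<Longrightarrow> k \<noteq> 2 * j \<Longrightarrow> k div 2 \<noteq> j"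
    by auto
  then show "interleave (A \<circ> transpose i j) B m ! k =
    (interleave A B m)[2*i := interleave A B m ! (2*j), 2*j := interleave A B m ! (2*i)] ! k"
    using assms k by (auto simp: nth_interleave nth_list_update)
qed simp

lemma interleave_transpose_snd:
  assumes "i < m" "j < m"
  shows "interleave A (B \<circ> transpose i j) m =
    (interleave A B m)[2*i+1 := interleave A B m ! (2*j+1), 2*j+1 := interleave A B m ! (2*i+1)]"
proof (rule nth_equalityI)
  fix k assume "k < length (interleave A (B \<circ> transpose i j) m)"
  then have k: "k < 2 * m" by simp
  have "odd k \<Longrightarrow> k \<noteq> 2 * i + 1 \<Longrightarrow> k div 2 \<noteq> i" "odd k \<Longrightarrow> k \<noteq> 2 * j + 1 \<Longrightarrow> k div 2 \<noteq> j"
    by auto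
  then show "interleave A (B \<circ> transpose i j) m ! k =
    (interleave A B m)[2*i+1 := interleave A B m ! (2*j+1), 2*j+1 := interleave A B m ! (2*i+1)] ! k"
    using assms k by (auto simp: nth_interleave nth_list_update)
qed simp

lemma interleave_exchange_step:
  fixes A B :: "nat \<Rightarrow> 'a"
  defines "X k \<equiv> interleave (\<lambda>j. if j < k then B j else A j) (\<lambda>j. if j < k then A j else B j)"
  assumes "k < m"
  shows "X (Suc k) m = (X k m)[2*k := X k m ! (2*k+1), 2*k+1 := X k m ! (2*k)]"
  using assms by (intro nth_equalityI) (auto simp: X_def nth_interleave nth_list_update)

lemma alt_elem_swap:
  assumes "alt_elem l H" "set xs \<subseteq> {1..2*l}" "i < length xs" "j < length xs" "i \<noteq> j"
  shows "H (xs[i := xs ! j, j := xs ! i]) = - H xs"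
  using assms unfolding alt_elem_def by blast

lemma alt_elem_interleave_transpose_fst:
  assumes "alt_elem l H" "set (interleave A B m) \<subseteq> {1..2*l}" "i < m" "j < m" "i \<noteq> j"
  shows "H (interleave (A \<circ> transpose i j) B m) = - H (interleave A B m)"
  unfolding interleave_transpose_fst[OF assms(3,4)] using assms by (intro alt_elem_swap) auto

lemma alt_elem_interleave_transpose_snd:
  assumes "alt_elem l H" "set (interleave A B m) \<subseteq> {1..2*l}" "i < m" "j < m" "i \<noteq> j"
  shows "H (interleave A (B \<circ> transpose i j) m) = - H (interleave A B m)"
  unfolding interleave_transpose_snd[OF assms(3,4)] using assms by (intro alt_elem_swap) auto

lemma alt_elem_interleave_exchange:
  assumes "alt_elem l H" "\<And>j. j < m \<Longrightarrow> A j \<in> {1..2*l} \<and> B j \<in> {1..2*l}" "k \<le> m"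
  shows "H (interleave (\<lambda>j. if j < k then B j else A j) (\<lambda>j. if j < k then A j else B j) m)
    = (-1) ^ k * H (interleave A B m)"
  using assms(3)
proof (induction k)
  case (Suc k)
  have "set (interleave (\<lambda>j. if j < k then B j else A j) (\<lambda>j. if j < k then A j else B j) m)
      \<subseteq> {1..2*l}"
    by (rule set_interleave_subset) (use assms(2) in auto)
  with Suc show ?case
    unfolding interleave_exchange_step[OF Suc_le_lessD[OF Suc.prems]]
    using alt_elem_swap[OF assms(1)] by simp
qed simp

section \<open>Eulerian graphs with compatible local orderings\<close>

lemma odd_less_eq_image: "even (n::nat) \<Longrightarrow> {i. odd i \<and> i < n} = (\<lambda>j. 2*j+1) ` {..<n div 2}"
proof (intro set_eqI iffI)
  fix i assume "even n" "i \<in> {i. odd i \<and> i < n}"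
  then have "i = 2 * (i div 2) + 1" "i div 2 < n div 2" by auto
  then show "i \<in> (\<lambda>j. 2*j+1) ` {..<n div 2}" by (metis lessThan_iff rev_image_eqI)
qed auto

lemma even_between_eq_image: "even (n::nat) \<Longrightarrow> {i. even i \<and> 2 \<le> i \<and> i \<le> n} = (\<lambda>j. 2*j+2) ` {..<n div 2}"
proof (intro set_eqI iffI)
  fix i assume "even n" "i \<in> {i. even i \<and> 2 \<le> i \<and> i \<le> n}"
  then have "i = 2 * (i div 2 - 1) + 2" "i div 2 - 1 < n div 2" by auto
  then show "i \<in> (\<lambda>j. 2*j+2) ` {..<n div 2}" by (metis lessThan_iff rev_image_eqI)
qed auto

lemma transpose_inj_on_apply:
  "inj_on f A \<Longrightarrow> i \<in> A \<Longrightarrow> k \<in> A \<Longrightarrow> j \<in> A \<Longrightarrow> transpose (f i) (f k) (f j) = f (transpose i k j)"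
  by (auto simp: transpose_def inj_on_eq_iff)

lemma prod_eq_neg_if_one_factor_neg:
  assumes "finite V" "v \<in> V" "g' v = - g v" "\<And>w. w \<in> V \<Longrightarrow> w \<noteq> v \<Longrightarrow> g' w = g w"
  shows "(\<Prod>w\<in>V. g' w) = - (\<Prod>w\<in>V. g w :: 'a :: comm_ring_1)"
proof -
  have "(\<Prod>w\<in>V - {v}. g' w) = (\<Prod>w\<in>V - {v}. g w)" using assms(4) by (intro prod.cong) auto
  then show ?thesis using prod.remove[OF assms(1,2), of g'] prod.remove[OF assms(1,2), of g] assms(3)
    by simp
qed

lemma in_arcs_head: "x \<in> E \<Longrightarrow> x \<in> in_arcs E \<omega> (snd (\<omega> x))"
  unfolding in_arcs_def by simp

lemma in_arcs_subset: "in_arcs E \<omega> v \<subseteq> E" and out_arcs_subset: "out_arcs E \<omega> v \<subseteq> E"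
  unfolding in_arcs_def out_arcs_def by auto

lemma circuits_eq_orbits: "circuits E \<omega> km kp = orbit_from (next_arc E \<omega> km kp) ` E"
  unfolding circuits_def orbit_from_def by auto

locale eulerian_graph =
  fixes V :: "'v set" and E :: "'e set" and ends :: "'e \<Rightarrow> 'v \<times> 'v"
  assumes graph: "graph V E ends" and eulerian: "eulerian V E ends"
begin

definition admissible :: "('e \<Rightarrow> 'v \<times> 'v) \<Rightarrow> ('v \<Rightarrow> 'e \<Rightarrow> nat) \<Rightarrow> ('v \<Rightarrow> 'e \<Rightarrow> nat) \<Rightarrow> bool" where
  "admissible \<omega> km kp \<longleftrightarrow> eulerian_orientation V E ends \<omega> \<and> compatible_ordering V E ends \<omega> km kp"

abbreviation half_deg :: "'v \<Rightarrow> nat" where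
  "half_deg v \<equiv> deg E ends v div 2"

abbreviation in_arc :: "('e \<Rightarrow> 'v \<times> 'v) \<Rightarrow> ('v \<Rightarrow> 'e \<Rightarrow> nat) \<Rightarrow> ('v \<Rightarrow> 'e \<Rightarrow> nat) \<Rightarrow> 'v \<Rightarrow> nat \<Rightarrow> 'e" where
  "in_arc \<omega> km kp v j \<equiv> arc_lab E \<omega> km kp v (2*j+1)"

abbreviation out_arc :: "('e \<Rightarrow> 'v \<times> 'v) \<Rightarrow> ('v \<Rightarrow> 'e \<Rightarrow> nat) \<Rightarrow> ('v \<Rightarrow> 'e \<Rightarrow> nat) \<Rightarrow> 'v \<Rightarrow> nat \<Rightarrow> 'e" where
  "out_arc \<omega> km kp v j \<equiv> arc_lab E \<omega> km kp v (2*j+2)"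

lemma finite_E: "finite E" and finite_V: "finite V"
  using graph unfolding graph_def by auto

lemma even_deg: "v \<in> V \<Longrightarrow> even (deg E ends v)"
  using eulerian unfolding eulerian_def by auto

context
  fixes \<omega> km kp
  assumes adm: "admissible \<omega> km kp"
begin

lemma head_in_V: "e \<in> E \<Longrightarrow> snd (\<omega> e) \<in> V"
  and tail_in_V: "e \<in> E \<Longrightarrow> fst (\<omega> e) \<in> V"
proof -
  assume e: "e \<in> E"
  have "\<omega> e = ends e \<or> \<omega> e = prod.swap (ends e)"
    using adm e unfolding admissible_def eulerian_orientation_def orientation_def by blast
  moreover have "fst (ends e) \<in> V" "snd (ends e) \<in> V" using graph e unfolding graph_def by auto
  ultimately show "snd (\<omega> e) \<in> V" "fst (\<omega> e) \<in> V" by (cases "ends e", auto)+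
qed

lemma bij_betw_in_labels:
  assumes "v \<in> V"
  shows "bij_betw (km v) (in_arcs E \<omega> v) ((\<lambda>j. 2*j+1) ` {..<half_deg v})"
proof -
  have "bij_betw (km v) (in_arcs E \<omega> v) {i. odd i \<and> i < deg E ends v}"
    using adm assms unfolding admissible_def compatible_ordering_def by blast
  then show ?thesis unfolding odd_less_eq_image[OF even_deg[OF assms]] .
qed

lemma bij_betw_out_labels:
  assumes "v \<in> V"
  shows "bij_betw (kp v) (out_arcs E \<omega> v) ((\<lambda>j. 2*j+2) ` {..<half_deg v})"
proof -
  have "bij_betw (kp v) (out_arcs E \<omega> v) {i. even i \<and> 2 \<le> i \<and> i \<le> deg E ends v}"
    using adm assms unfolding admissible_def compatible_ordering_def by blast
  then show ?thesis unfolding even_between_eq_image[OF even_deg[OF assms]] .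
qed

lemma in_label_cases: "v \<in> V \<Longrightarrow> e \<in> in_arcs E \<omega> v \<Longrightarrow> \<exists>j<half_deg v. km v e = 2*j+1"
  using bij_betw_apply[OF bij_betw_in_labels] by blast

lemma out_label_cases: "v \<in> V \<Longrightarrow> e \<in> out_arcs E \<omega> v \<Longrightarrow> \<exists>j<half_deg v. kp v e = 2*j+2"
  using bij_betw_apply[OF bij_betw_out_labels] by blast

lemma in_arc_eqI:
  assumes "v \<in> V" "e \<in> in_arcs E \<omega> v" "km v e = 2*j+1"
  shows "in_arc \<omega> km kp v j = e"
proof -
  have "inj_on (km v) (in_arcs E \<omega> v)" using bij_betw_in_labels[OF assms(1)] by (rule bij_betw_imp_inj_on)
  then have "(THE e. e \<in> in_arcs E \<omega> v \<and> km v e = 2*j+1) = e"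
    using assms by (intro the_equality) (auto simp: inj_on_def)
  then show ?thesis unfolding arc_lab_def by simp
qed

lemma out_arc_eqI:
  assumes "v \<in> V" "e \<in> out_arcs E \<omega> v" "kp v e = 2*j+2"
  shows "out_arc \<omega> km kp v j = e"
proof -
  have "inj_on (kp v) (out_arcs E \<omega> v)" using bij_betw_out_labels[OF assms(1)] by (rule bij_betw_imp_inj_on)
  then have "(THE e. e \<in> out_arcs E \<omega> v \<and> kp v e = 2*j+2) = e"
    using assms by (intro the_equality) (auto simp: inj_on_def)
  then show ?thesis unfolding arc_lab_def by simp
qed

lemma in_arc_mem:
  assumes "v \<in> V" "j < half_deg v"
  shows "in_arc \<omega> km kp v j \<in> in_arcs E \<omega> v \<and> km v (in_arc \<omega> km kp v j) = 2*j+1"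
proof -
  have "2*j+1 \<in> km v ` in_arcs E \<omega> v"
    using bij_betw_imp_surj_on[OF bij_betw_in_labels[OF assms(1)]] assms(2) by auto
  then obtain e where "e \<in> in_arcs E \<omega> v" "km v e = 2*j+1" by force
  then show ?thesis using in_arc_eqI[OF assms(1)] by simp
qed

lemma out_arc_mem:
  assumes "v \<in> V" "j < half_deg v"
  shows "out_arc \<omega> km kp v j \<in> out_arcs E \<omega> v \<and> kp v (out_arc \<omega> km kp v j) = 2*j+2"
proof -
  have "2*j+2 \<in> kp v ` out_arcs E \<omega> v"
    using bij_betw_imp_surj_on[OF bij_betw_out_labels[OF assms(1)]] assms(2) by auto
  then obtain e where "e \<in> out_arcs E \<omega> v" "kp v e = 2*j+2" by force
  then show ?thesis using out_arc_eqI[OF assms(1)] by simp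
qed

lemma in_arc_in_E: "v \<in> V \<Longrightarrow> j < half_deg v \<Longrightarrow> in_arc \<omega> km kp v j \<in> E"
  using in_arc_mem in_arcs_subset[of E \<omega> v] by blast

lemma out_arc_in_E: "v \<in> V \<Longrightarrow> j < half_deg v \<Longrightarrow> out_arc \<omega> km kp v j \<in> E"
  using out_arc_mem out_arcs_subset[of E \<omega> v] by blast

lemma bij_betw_in_arc:
  assumes "v \<in> V"
  shows "bij_betw (in_arc \<omega> km kp v) {..<half_deg v} (in_arcs E \<omega> v)"
proof (rule bij_betwI[where g = "\<lambda>e. km v e div 2"])
  show "in_arc \<omega> km kp v \<in> {..<half_deg v} \<rightarrow> in_arcs E \<omega> v"
    using in_arc_mem[OF assms] by simp
  show "(\<lambda>e. km v e div 2) \<in> in_arcs E \<omega> v \<rightarrow> {..<half_deg v}"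
    using in_label_cases[OF assms] by fastforce
  show "km v (in_arc \<omega> km kp v j) div 2 = j" if "j \<in> {..<half_deg v}" for j
    using in_arc_mem[OF assms] that by simp
  show "in_arc \<omega> km kp v (km v e div 2) = e" if "e \<in> in_arcs E \<omega> v" for e
    using in_label_cases[OF assms that] in_arc_eqI[OF assms that] by force
qed

lemma bij_betw_out_arc:
  assumes "v \<in> V"
  shows "bij_betw (out_arc \<omega> km kp v) {..<half_deg v} (out_arcs E \<omega> v)"
proof (rule bij_betwI[where g = "\<lambda>e. kp v e div 2 - 1"])
  show "out_arc \<omega> km kp v \<in> {..<half_deg v} \<rightarrow> out_arcs E \<omega> v"
    using out_arc_mem[OF assms] by simp
  show "(\<lambda>e. kp v e div 2 - 1) \<in> out_arcs E \<omega> v \<rightarrow> {..<half_deg v}"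
    using out_label_cases[OF assms] by fastforce
  show "kp v (out_arc \<omega> km kp v j) div 2 - 1 = j" if "j \<in> {..<half_deg v}" for j
    using out_arc_mem[OF assms] that by simp
  show "out_arc \<omega> km kp v (kp v e div 2 - 1) = e" if "e \<in> out_arcs E \<omega> v" for e
    using out_label_cases[OF assms that] out_arc_eqI[OF assms that] by force
qed

lemma next_arc_mem:
  assumes "x \<in> E"
  shows "next_arc E \<omega> km kp x \<in> out_arcs E \<omega> (snd (\<omega> x))
    \<and> kp (snd (\<omega> x)) (next_arc E \<omega> km kp x) = km (snd (\<omega> x)) x + 1"
proof -
  obtain j where "j < half_deg (snd (\<omega> x))" "km (snd (\<omega> x)) x = 2*j+1"
    using in_label_cases[OF head_in_V[OF assms] in_arcs_head[OF assms]] by blast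
  then show ?thesis using out_arc_mem[OF head_in_V[OF assms]] unfolding next_arc_def by simp
qed

lemma next_arc_eqI:
  assumes "x \<in> E" "y \<in> out_arcs E \<omega> (snd (\<omega> x))" "kp (snd (\<omega> x)) y = km (snd (\<omega> x)) x + 1"
  shows "next_arc E \<omega> km kp x = y"
proof -
  have "inj_on (kp (snd (\<omega> x))) (out_arcs E \<omega> (snd (\<omega> x)))"
    by (rule bij_betw_imp_inj_on[OF bij_betw_out_labels[OF head_in_V[OF assms(1)]]])
  moreover have "kp (snd (\<omega> x)) (next_arc E \<omega> km kp x) = kp (snd (\<omega> x)) y"
    using next_arc_mem[OF assms(1)] assms(3) by simp
  ultimately show ?thesis using next_arc_mem[OF assms(1)] assms(2) by (blast dest: inj_onD)
qed

lemma next_arc_in_E: "x \<in> E \<Longrightarrow> next_arc E \<omega> km kp x \<in> E"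
  using next_arc_mem out_arcs_subset[of E \<omega> "snd (\<omega> x)"] by blast

lemma inj_on_next_arc: "inj_on (next_arc E \<omega> km kp) E"
proof (rule inj_onI)
  fix x y assume x: "x \<in> E" and y: "y \<in> E" and eq: "next_arc E \<omega> km kp x = next_arc E \<omega> km kp y"
  have head: "snd (\<omega> x) = snd (\<omega> y)"
    using next_arc_mem[OF x] next_arc_mem[OF y] unfolding eq out_arcs_def by simp
  then have "km (snd (\<omega> x)) x = km (snd (\<omega> x)) y"
    using next_arc_mem[OF x] next_arc_mem[OF y] unfolding eq by simp
  moreover have "inj_on (km (snd (\<omega> x))) (in_arcs E \<omega> (snd (\<omega> x)))"
    by (rule bij_betw_imp_inj_on[OF bij_betw_in_labels[OF head_in_V[OF x]]])
  moreover have "y \<in> in_arcs E \<omega> (snd (\<omega> x))" unfolding head by (rule in_arcs_head[OF y])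
  ultimately show "x = y" using in_arcs_head[OF x] by (blast dest: inj_onD)
qed

lemma permutes_next_arc: "perm_restrict (next_arc E \<omega> km kp) E permutes E"
  by (rule permutes_perm_restrict[OF finite_E _ inj_on_next_arc]) (use next_arc_in_E in auto)

lemma num_circuits_eq_card_orbits:
  "num_circuits E \<omega> km kp = card (orbit_from (perm_restrict (next_arc E \<omega> km kp) E) ` E)"
proof -
  have sub: "next_arc E \<omega> km kp ` E \<subseteq> E" using next_arc_in_E by auto
  have "orbit_from (perm_restrict (next_arc E \<omega> km kp) E) ` E = orbit_from (next_arc E \<omega> km kp) ` E"
    by (rule image_cong[OF refl orbit_from_perm_restrict[OF sub]])
  then show ?thesis unfolding num_circuits_def circuits_eq_orbits by simp
qed

end

end

lemma f_idx_range: "x \<in> {1..2*l} \<Longrightarrow> f_idx l x \<in> {1..2*l}"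
  unfolding f_idx_def by auto

lemma f_idx_involutive: "x \<in> {1..2*l} \<Longrightarrow> f_idx l (f_idx l x) = x"
  unfolding f_idx_def by auto

lemma f_sgn_f_idx: "x \<in> {1..2*l} \<Longrightarrow> f_sgn l (f_idx l x) = - f_sgn l x"
  unfolding f_idx_def f_sgn_def by auto

context eulerian_graph
begin

definition form_args ::
  "nat \<Rightarrow> ('e \<Rightarrow> 'v \<times> 'v) \<Rightarrow> ('v \<Rightarrow> 'e \<Rightarrow> nat) \<Rightarrow> ('v \<Rightarrow> 'e \<Rightarrow> nat) \<Rightarrow> ('e \<Rightarrow> nat) \<Rightarrow> 'v \<Rightarrow> nat list" where
  "form_args l \<omega> km kp p v =
     interleave (\<lambda>j. p (in_arc \<omega> km kp v j)) (\<lambda>j. f_idx l (p (out_arc \<omega> km kp v j))) (half_deg v)"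

definition weight :: "nat \<Rightarrow> (nat list \<Rightarrow> complex) \<Rightarrow> ('e \<Rightarrow> 'v \<times> 'v) \<Rightarrow> ('v \<Rightarrow> 'e \<Rightarrow> nat)
    \<Rightarrow> ('v \<Rightarrow> 'e \<Rightarrow> nat) \<Rightarrow> ('e \<Rightarrow> nat) \<Rightarrow> complex" where
  "weight l H \<omega> km kp p = (-1) ^ num_circuits E \<omega> km kp * (\<Prod>v\<in>V. local_val l H E ends \<omega> km kp p v)"

lemma s_phi_eq_sum_weight:
  "s_phi l H V E ends \<phi> \<omega> km kp = (\<Sum>\<psi>\<in>PiE E (\<lambda>_. {0, l}). weight l H \<omega> km kp (\<lambda>e. \<phi> e + \<psi> e))"
  unfolding s_phi_def weight_def sum_distrib_left ..

lemma s_h_eq_sum_weight: "s_h l H V E ends \<omega> km kp = (\<Sum>p\<in>PiE E (\<lambda>_. {1..2*l}). weight l H \<omega> km kp p)"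
  unfolding s_h_def weight_def sum_distrib_left ..

lemma local_val_eq:
  "local_val l H E ends \<omega> km kp p v =
     (\<Prod>j<half_deg v. f_sgn l (p (out_arc \<omega> km kp v j))) * H (form_args l \<omega> km kp p v)"
  unfolding local_val_def Let_def form_args_def concat_map_pair_eq_interleave ..

context
  fixes \<omega> km kp
  assumes adm: "admissible \<omega> km kp"
begin

lemma set_form_args_subset:
  assumes "\<forall>e\<in>E. p e \<in> {1..2*l}" "v \<in> V"
  shows "set (form_args l \<omega> km kp p v) \<subseteq> {1..2*l}"
  unfolding form_args_def
  using assms in_arc_in_E[OF adm assms(2)] out_arc_in_E[OF adm assms(2)] f_idx_range
  by (intro set_interleave_subset) auto

lemma prod_out_arcs: "(\<Prod>v\<in>V. \<Prod>j<half_deg v. g (out_arc \<omega> km kp v j)) = (\<Prod>e\<in>E. g e)"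
proof -
  have "(\<Prod>j<half_deg v. g (out_arc \<omega> km kp v j)) = (\<Prod>e\<in>out_arcs E \<omega> v. g e)" if "v \<in> V" for v
    using prod.reindex_bij_betw[OF bij_betw_out_arc[OF adm that]] by simp
  then have "(\<Prod>v\<in>V. \<Prod>j<half_deg v. g (out_arc \<omega> km kp v j)) = (\<Prod>v\<in>V. \<Prod>e\<in>out_arcs E \<omega> v. g e)"
    by (rule prod.cong[OF refl])
  also have "\<dots> = (\<Prod>e\<in>E. g e)"
    unfolding out_arcs_def by (rule prod.group[OF finite_E finite_V]) (use tail_in_V[OF adm] in auto)
  finally show ?thesis .
qed

lemma weight_eq:
  "weight l H \<omega> km kp p =
    (-1) ^ num_circuits E \<omega> km kp * (\<Prod>e\<in>E. f_sgn l (p e)) * (\<Prod>v\<in>V. H (form_args l \<omega> km kp p v))"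
  unfolding weight_def local_val_eq prod.distrib prod_out_arcs[of "\<lambda>e. f_sgn l (p e)"]
  by (simp add: mult.assoc)

end

lemma num_circuits_parity_transpose:
  assumes "admissible \<omega> km kp" "admissible \<omega> km' kp'" "a \<in> E" "b \<in> E" "a \<noteq> b"
    "perm_restrict (next_arc E \<omega> km' kp') E = perm_restrict (next_arc E \<omega> km kp) E \<circ> transpose a b \<or>
     perm_restrict (next_arc E \<omega> km' kp') E = transpose a b \<circ> perm_restrict (next_arc E \<omega> km kp) E"
  shows "(-1::complex) ^ num_circuits E \<omega> km' kp' = - ((-1) ^ num_circuits E \<omega> km kp)"
  using orbits_parity_comp_transpose[OF permutes_next_arc[OF assms(1)] finite_E assms(3-6)]
  unfolding num_circuits_eq_card_orbits[OF assms(1)] num_circuits_eq_card_orbits[OF assms(2)] .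

lemma admissible_transpose_in_labels:
  assumes "admissible \<omega> km kp" "a \<in> in_arcs E \<omega> v" "b \<in> in_arcs E \<omega> v"
  shows "admissible \<omega> (km(v := km v \<circ> transpose a b)) kp"
proof -
  have "bij_betw (km v \<circ> transpose a b) (in_arcs E \<omega> v) {i. odd i \<and> i < deg E ends v}" if "v \<in> V"
    using assms that unfolding admissible_def compatible_ordering_def
    by (intro bij_betw_trans[OF permutes_imp_bij[OF permutes_swap_id]]) auto
  then show ?thesis using assms(1) unfolding admissible_def compatible_ordering_def by auto
qed

lemma admissible_transpose_out_labels:
  assumes "admissible \<omega> km kp" "a \<in> out_arcs E \<omega> v" "b \<in> out_arcs E \<omega> v"
  shows "admissible \<omega> km (kp(v := kp v \<circ> transpose a b))"
proof -
  have "bij_betw (kp v \<circ> transpose a b) (out_arcs E \<omega> v) {i. even i \<and> 2 \<le> i \<and> i \<le> deg E ends v}"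
    if "v \<in> V"
    using assms that unfolding admissible_def compatible_ordering_def
    by (intro bij_betw_trans[OF permutes_imp_bij[OF permutes_swap_id]]) auto
  then show ?thesis using assms(1) unfolding admissible_def compatible_ordering_def by auto
qed

end

section \<open>Independence of the local ordering\<close>

lemma arc_lab_fun_upd_other:
  "w \<noteq> v \<Longrightarrow> arc_lab E \<omega> (km(v := f)) kp w n = arc_lab E \<omega> km kp w n"
  "w \<noteq> v \<Longrightarrow> arc_lab E \<omega> km (kp(v := f)) w n = arc_lab E \<omega> km kp w n"
  by (simp_all add: arc_lab_def)

lemma arc_lab_even_indep: "even n \<Longrightarrow> arc_lab E \<omega> km' kp w n = arc_lab E \<omega> km kp w n"
  by (simp add: arc_lab_def)

lemma transpose_mem_closed: "x \<in> A \<Longrightarrow> a \<in> A \<Longrightarrow> b \<in> A \<Longrightarrow> transpose a b x \<in> A"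
  by (auto simp: transpose_def)

context eulerian_graph
begin

lemma in_arc_transpose_in_labels:
  assumes adm: "admissible \<omega> km kp" and v: "v \<in> V"
    and a: "a \<in> in_arcs E \<omega> v" and b: "b \<in> in_arcs E \<omega> v" and j: "j < half_deg v"
  shows "in_arc \<omega> (km(v := km v \<circ> transpose a b)) kp v j = transpose a b (in_arc \<omega> km kp v j)"
proof (rule in_arc_eqI[OF admissible_transpose_in_labels[OF adm a b] v])
  show "transpose a b (in_arc \<omega> km kp v j) \<in> in_arcs E \<omega> v"
    using in_arc_mem[OF adm v j] a b by (intro transpose_mem_closed) auto
  show "(km(v := km v \<circ> transpose a b)) v (transpose a b (in_arc \<omega> km kp v j)) = 2 * j + 1"
    using in_arc_mem[OF adm v j] by simp
qed

lemma out_arc_transpose_out_labels: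
  assumes adm: "admissible \<omega> km kp" and v: "v \<in> V"
    and a: "a \<in> out_arcs E \<omega> v" and b: "b \<in> out_arcs E \<omega> v" and j: "j < half_deg v"
  shows "out_arc \<omega> km (kp(v := kp v \<circ> transpose a b)) v j = transpose a b (out_arc \<omega> km kp v j)"
proof (rule out_arc_eqI[OF admissible_transpose_out_labels[OF adm a b] v])
  show "transpose a b (out_arc \<omega> km kp v j) \<in> out_arcs E \<omega> v"
    using out_arc_mem[OF adm v j] a b by (intro transpose_mem_closed) auto
  show "(kp(v := kp v \<circ> transpose a b)) v (transpose a b (out_arc \<omega> km kp v j)) = 2 * j + 2"
    using out_arc_mem[OF adm v j] by simp
qed

lemma next_arc_transpose_in_labels:
  assumes adm: "admissible \<omega> km kp" and v: "v \<in> V"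
    and a: "a \<in> in_arcs E \<omega> v" and b: "b \<in> in_arcs E \<omega> v" and x: "x \<in> E"
  shows "next_arc E \<omega> (km(v := km v \<circ> transpose a b)) kp x = next_arc E \<omega> km kp (transpose a b x)"
proof (cases "snd (\<omega> x) = v")
  case True
  have "transpose a b x \<in> in_arcs E \<omega> v"
    using in_arcs_head[OF x] True a b by (intro transpose_mem_closed) auto
  moreover obtain j where "km v (transpose a b x) = 2*j+1" using in_label_cases[OF adm v] calculation by blast
  ultimately show ?thesis
    using True arc_lab_even_indep[of "km v (transpose a b x) + 1"]
    unfolding next_arc_def in_arcs_def by simp
next
  case False
  then have "x \<noteq> a" "x \<noteq> b" using a b unfolding in_arcs_def by auto
  then show ?thesis using False by (simp add: next_arc_def arc_lab_fun_upd_other)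
qed

lemma next_arc_transpose_out_labels:
  assumes adm: "admissible \<omega> km kp" and v: "v \<in> V"
    and a: "a \<in> out_arcs E \<omega> v" and b: "b \<in> out_arcs E \<omega> v" and x: "x \<in> E"
  shows "next_arc E \<omega> km (kp(v := kp v \<circ> transpose a b)) x = transpose a b (next_arc E \<omega> km kp x)"
proof (cases "snd (\<omega> x) = v")
  case True
  obtain j where "j < half_deg v" "km v x = 2*j+1"
    using in_label_cases[OF adm v] in_arcs_head[OF x] True by metis
  then show ?thesis
    using out_arc_transpose_out_labels[OF adm v a b] True unfolding next_arc_def by simp
next
  case False
  have "next_arc E \<omega> km kp x \<in> out_arcs E \<omega> (snd (\<omega> x))" using next_arc_mem[OF adm x] by blast
  then have "next_arc E \<omega> km kp x \<noteq> a" "next_arc E \<omega> km kp x \<noteq> b"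
    using False a b unfolding out_arcs_def by auto
  then show ?thesis using False by (simp add: next_arc_def arc_lab_fun_upd_other)
qed


lemma weight_transpose_in_labels:
  assumes adm: "admissible \<omega> km kp" and alt: "alt_elem l H" and p: "\<forall>e\<in>E. p e \<in> {1..2*l}"
    and v: "v \<in> V" and i: "i < half_deg v" and k: "k < half_deg v" and ik: "i \<noteq> k"
  defines "km' \<equiv> km(v := km v \<circ> transpose (in_arc \<omega> km kp v i) (in_arc \<omega> km kp v k))"
  shows "weight l H \<omega> km' kp p = weight l H \<omega> km kp p"
proof -
  define a b where "a = in_arc \<omega> km kp v i" and "b = in_arc \<omega> km kp v k"
  have a: "a \<in> in_arcs E \<omega> v" and b: "b \<in> in_arcs E \<omega> v"
    unfolding a_def b_def using in_arc_mem[OF adm v] i k by blast+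
  have inj: "inj_on (in_arc \<omega> km kp v) {..<half_deg v}"
    using bij_betw_in_arc[OF adm v] by (rule bij_betw_imp_inj_on)
  have ab: "a \<noteq> b" unfolding a_def b_def using inj i k ik by (auto dest: inj_onD)
  have adm': "admissible \<omega> km' kp"
    unfolding km'_def a_def[symmetric] b_def[symmetric] by (rule admissible_transpose_in_labels[OF adm a b])
  have "perm_restrict (next_arc E \<omega> km' kp) E = perm_restrict (next_arc E \<omega> km kp) E \<circ> transpose a b"
    using next_arc_transpose_in_labels[OF adm v a b] a b in_arcs_subset[of E \<omega> v]
    unfolding km'_def a_def[symmetric] b_def[symmetric]
    by (auto simp: fun_eq_iff perm_restrict_def transpose_def)
  then have circuits: "(-1::complex) ^ num_circuits E \<omega> km' kp = - ((-1) ^ num_circuits E \<omega> km kp)"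
    using a b ab in_arcs_subset[of E \<omega> v] by (intro num_circuits_parity_transpose[OF adm adm']) auto
  have "form_args l \<omega> km' kp p v =
    interleave ((\<lambda>j. p (in_arc \<omega> km kp v j)) \<circ> transpose i k) (\<lambda>j. f_idx l (p (out_arc \<omega> km kp v j))) (half_deg v)"
    unfolding form_args_def
  proof (rule interleave_cong)
    fix j assume j: "j < half_deg v"
    have "transpose a b (in_arc \<omega> km kp v j) = in_arc \<omega> km kp v (transpose i k j)"
      unfolding a_def b_def using transpose_inj_on_apply[OF inj] i k j by simp
    then show "p (in_arc \<omega> km' kp v j) = ((\<lambda>j. p (in_arc \<omega> km kp v j)) \<circ> transpose i k) j"
      using in_arc_transpose_in_labels[OF adm v a b j] unfolding km'_def a_def b_def by simp
  qed (simp add: arc_lab_def)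
  then have "H (form_args l \<omega> km' kp p v) = - H (form_args l \<omega> km kp p v)"
    using alt_elem_interleave_transpose_fst[OF alt set_form_args_subset[OF adm p v, unfolded form_args_def] i k ik]
    unfolding form_args_def by simp
  moreover have "form_args l \<omega> km' kp p w = form_args l \<omega> km kp p w" if "w \<noteq> v" for w
    using that unfolding form_args_def km'_def by (simp add: arc_lab_fun_upd_other)
  ultimately have "(\<Prod>w\<in>V. H (form_args l \<omega> km' kp p w)) = - (\<Prod>w\<in>V. H (form_args l \<omega> km kp p w))"
    by (intro prod_eq_neg_if_one_factor_neg[OF finite_V v]) auto
  then show ?thesis unfolding weight_eq[OF adm] weight_eq[OF adm'] circuits by simp
qed

lemma weight_transpose_out_labels:
  assumes adm: "admissible \<omega> km kp" and alt: "alt_elem l H" and p: "\<forall>e\<in>E. p e \<in> {1..2*l}"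
    and v: "v \<in> V" and i: "i < half_deg v" and k: "k < half_deg v" and ik: "i \<noteq> k"
  defines "kp' \<equiv> kp(v := kp v \<circ> transpose (out_arc \<omega> km kp v i) (out_arc \<omega> km kp v k))"
  shows "weight l H \<omega> km kp' p = weight l H \<omega> km kp p"
proof -
  define a b where "a = out_arc \<omega> km kp v i" and "b = out_arc \<omega> km kp v k"
  have a: "a \<in> out_arcs E \<omega> v" and b: "b \<in> out_arcs E \<omega> v"
    unfolding a_def b_def using out_arc_mem[OF adm v] i k by blast+
  have inj: "inj_on (out_arc \<omega> km kp v) {..<half_deg v}"
    using bij_betw_out_arc[OF adm v] by (rule bij_betw_imp_inj_on)
  have ab: "a \<noteq> b" unfolding a_def b_def using inj i k ik by (auto dest: inj_onD)
  have adm': "admissible \<omega> km kp'"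
    unfolding kp'_def a_def[symmetric] b_def[symmetric] by (rule admissible_transpose_out_labels[OF adm a b])
  have "perm_restrict (next_arc E \<omega> km kp') E = transpose a b \<circ> perm_restrict (next_arc E \<omega> km kp) E"
    using next_arc_transpose_out_labels[OF adm v a b] a b out_arcs_subset[of E \<omega> v]
    unfolding kp'_def a_def[symmetric] b_def[symmetric]
    by (auto simp: fun_eq_iff perm_restrict_def transpose_def)
  then have circuits: "(-1::complex) ^ num_circuits E \<omega> km kp' = - ((-1) ^ num_circuits E \<omega> km kp)"
    using a b ab out_arcs_subset[of E \<omega> v] by (intro num_circuits_parity_transpose[OF adm adm']) auto
  have "form_args l \<omega> km kp' p v =
    interleave (\<lambda>j. p (in_arc \<omega> km kp v j)) ((\<lambda>j. f_idx l (p (out_arc \<omega> km kp v j))) \<circ> transpose i k) (half_deg v)"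
    unfolding form_args_def
  proof (rule interleave_cong)
    fix j assume j: "j < half_deg v"
    have "transpose a b (out_arc \<omega> km kp v j) = out_arc \<omega> km kp v (transpose i k j)"
      unfolding a_def b_def using transpose_inj_on_apply[OF inj] i k j by simp
    then show "f_idx l (p (out_arc \<omega> km kp' v j)) = ((\<lambda>j. f_idx l (p (out_arc \<omega> km kp v j))) \<circ> transpose i k) j"
      using out_arc_transpose_out_labels[OF adm v a b j] unfolding kp'_def a_def b_def by simp
  qed (simp add: arc_lab_def)
  then have "H (form_args l \<omega> km kp' p v) = - H (form_args l \<omega> km kp p v)"
    using alt_elem_interleave_transpose_snd[OF alt set_form_args_subset[OF adm p v, unfolded form_args_def] i k ik]
    unfolding form_args_def by simp
  moreover have "form_args l \<omega> km kp' p w = form_args l \<omega> km kp p w" if "w \<noteq> v" for w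
    using that unfolding form_args_def kp'_def by (simp add: arc_lab_fun_upd_other)
  ultimately have "(\<Prod>w\<in>V. H (form_args l \<omega> km kp' p w)) = - (\<Prod>w\<in>V. H (form_args l \<omega> km kp p w))"
    by (intro prod_eq_neg_if_one_factor_neg[OF finite_V v]) auto
  then show ?thesis unfolding weight_eq[OF adm] weight_eq[OF adm'] circuits by simp
qed


definition disagreements ::
  "('v \<Rightarrow> 'e set) \<Rightarrow> ('v \<Rightarrow> 'e \<Rightarrow> nat) \<Rightarrow> ('v \<Rightarrow> 'e \<Rightarrow> nat) \<Rightarrow> ('v \<times> 'e) set" where
  "disagreements A k k' = {(v, e). v \<in> V \<and> e \<in> A v \<and> k v e \<noteq> k' v e}"

lemma card_disagreements_transpose_less:
  assumes "\<And>w. A w \<subseteq> E" "v \<in> V" "a \<in> A v" "b \<in> A v" "k v a \<noteq> k' v a" "k v b = k' v a"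
    and "inj_on (k' v) (A v)"
  shows "card (disagreements A (k(v := k v \<circ> transpose a b)) k') < card (disagreements A k k')"
proof (rule psubset_card_mono)
  show "finite (disagreements A k k')"
    using assms(1) by (intro finite_subset[OF _ finite_cartesian_product[OF finite_V finite_E]])
      (auto simp: disagreements_def)
  have "k' v b \<noteq> k' v a" using assms(3-7) by (auto dest: inj_onD)
  then have "disagreements A (k(v := k v \<circ> transpose a b)) k' \<subseteq> disagreements A k k' - {(v, a)}"
    using assms(3-6) by (auto simp: disagreements_def transpose_def split: if_splits)
  then show "disagreements A (k(v := k v \<circ> transpose a b)) k' \<subset> disagreements A k k'"
    using assms(2,3,5) by (auto simp: disagreements_def)
qed

lemma weight_cong_labels:
  assumes adm: "admissible \<omega> km kp" and adm': "admissible \<omega> km' kp'"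
    and "disagreements (in_arcs E \<omega>) km km' = {}" "disagreements (out_arcs E \<omega>) kp kp' = {}"
  shows "weight l H \<omega> km kp p = weight l H \<omega> km' kp' p"
proof -
  have agree_in: "\<forall>v\<in>V. \<forall>e\<in>in_arcs E \<omega> v. km v e = km' v e"
    and agree_out: "\<forall>v\<in>V. \<forall>e\<in>out_arcs E \<omega> v. kp v e = kp' v e"
    using assms(3,4) unfolding disagreements_def by blast+
  have "in_arc \<omega> km kp v j = in_arc \<omega> km' kp' v j" if "v \<in> V" "j < half_deg v" for v j
    by (rule in_arc_eqI[OF adm' that(1), symmetric]) (use in_arc_mem[OF adm that] agree_in that in auto)
  moreover have "out_arc \<omega> km kp v j = out_arc \<omega> km' kp' v j" if "v \<in> V" "j < half_deg v" for v j
    by (rule out_arc_eqI[OF adm' that(1), symmetric]) (use out_arc_mem[OF adm that] agree_out that in auto)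
  ultimately have args: "form_args l \<omega> km kp p v = form_args l \<omega> km' kp' p v" if "v \<in> V" for v
    unfolding form_args_def using that by (intro interleave_cong) auto
  have next_eq: "next_arc E \<omega> km kp x = next_arc E \<omega> km' kp' x" if "x \<in> E" for x
  proof (rule next_arc_eqI[OF adm' that, symmetric])
    show "next_arc E \<omega> km kp x \<in> out_arcs E \<omega> (snd (\<omega> x))" using next_arc_mem[OF adm that] by blast
    show "kp' (snd (\<omega> x)) (next_arc E \<omega> km kp x) = km' (snd (\<omega> x)) x + 1"
      using next_arc_mem[OF adm that] in_arcs_head[OF that, of \<omega>] head_in_V[OF adm that] agree_in agree_out
      by auto
  qed
  have "orbit_from (next_arc E \<omega> km kp) x = orbit_from (next_arc E \<omega> km' kp') x" if "x \<in> E" for x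
    by (rule orbit_from_cong_on[of E]) (use next_eq next_arc_in_E[OF adm] that in auto)
  then have "orbit_from (next_arc E \<omega> km kp) ` E = orbit_from (next_arc E \<omega> km' kp') ` E"
    by (rule image_cong[OF refl])
  then have "num_circuits E \<omega> km kp = num_circuits E \<omega> km' kp'"
    unfolding num_circuits_def circuits_eq_orbits by simp
  then show ?thesis unfolding weight_eq[OF adm] weight_eq[OF adm'] using args by simp
qed

lemma in_label_transposition_step:
  assumes adm: "admissible \<omega> km kp" and adm': "admissible \<omega> km' kp'"
    and "(v, a) \<in> disagreements (in_arcs E \<omega>) km km'"
  obtains i j where "v \<in> V" "i < half_deg v" "j < half_deg v" "i \<noteq> j"
    "card (disagreements (in_arcs E \<omega>) (km(v := km v \<circ> transpose (in_arc \<omega> km kp v i) (in_arc \<omega> km kp v j))) km')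
      < card (disagreements (in_arcs E \<omega>) km km')"
proof -
  have v: "v \<in> V" and a: "a \<in> in_arcs E \<omega> v" and ne: "km v a \<noteq> km' v a"
    using assms(3) by (auto simp: disagreements_def)
  obtain j where j: "j < half_deg v" "km' v a = 2*j+1" using in_label_cases[OF adm' v a] by blast
  obtain i where i: "i < half_deg v" "km v a = 2*i+1" using in_label_cases[OF adm v a] by blast
  have "in_arc \<omega> km kp v i = a" using in_arc_eqI[OF adm v a i(2)] .
  then have "card (disagreements (in_arcs E \<omega>) (km(v := km v \<circ> transpose (in_arc \<omega> km kp v i) (in_arc \<omega> km kp v j))) km')
      < card (disagreements (in_arcs E \<omega>) km km')"
    using in_arc_mem[OF adm v j(1)] a v ne j(2) bij_betw_imp_inj_on[OF bij_betw_in_labels[OF adm' v]]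
    by (simp, intro card_disagreements_transpose_less in_arcs_subset) auto
  moreover have "i \<noteq> j" using ne i j by auto
  ultimately show ?thesis using that v i(1) j(1) by blast
qed

lemma out_label_transposition_step:
  assumes adm: "admissible \<omega> km kp" and adm': "admissible \<omega> km' kp'"
    and "(v, a) \<in> disagreements (out_arcs E \<omega>) kp kp'"
  obtains i j where "v \<in> V" "i < half_deg v" "j < half_deg v" "i \<noteq> j"
    "card (disagreements (out_arcs E \<omega>) (kp(v := kp v \<circ> transpose (out_arc \<omega> km kp v i) (out_arc \<omega> km kp v j))) kp')
      < card (disagreements (out_arcs E \<omega>) kp kp')"
proof -
  have v: "v \<in> V" and a: "a \<in> out_arcs E \<omega> v" and ne: "kp v a \<noteq> kp' v a"
    using assms(3) by (auto simp: disagreements_def)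
  obtain j where j: "j < half_deg v" "kp' v a = 2*j+2" using out_label_cases[OF adm' v a] by blast
  obtain i where i: "i < half_deg v" "kp v a = 2*i+2" using out_label_cases[OF adm v a] by blast
  have "out_arc \<omega> km kp v i = a" using out_arc_eqI[OF adm v a i(2)] .
  then have "card (disagreements (out_arcs E \<omega>) (kp(v := kp v \<circ> transpose (out_arc \<omega> km kp v i) (out_arc \<omega> km kp v j))) kp')
      < card (disagreements (out_arcs E \<omega>) kp kp')"
    using out_arc_mem[OF adm v j(1)] a v ne j(2) bij_betw_imp_inj_on[OF bij_betw_out_labels[OF adm' v]]
    by (simp, intro card_disagreements_transpose_less out_arcs_subset) auto
  moreover have "i \<noteq> j" using ne i j by auto
  ultimately show ?thesis using that v i(1) j(1) by blast
qed

lemma weight_indep_ordering: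
  assumes alt: "alt_elem l H" and p: "\<forall>e\<in>E. p e \<in> {1..2*l}"
  shows "admissible \<omega> km kp \<Longrightarrow> admissible \<omega> km' kp' \<Longrightarrow> weight l H \<omega> km kp p = weight l H \<omega> km' kp' p"
proof (induction "card (disagreements (in_arcs E \<omega>) km km') + card (disagreements (out_arcs E \<omega>) kp kp')"
    arbitrary: km kp rule: less_induct)
  case less
  note adm = less.prems(1) and adm' = less.prems(2)
  consider (in_diff) v a where "(v, a) \<in> disagreements (in_arcs E \<omega>) km km'"
    | (out_diff) v a where "(v, a) \<in> disagreements (out_arcs E \<omega>) kp kp'"
    | (agree) "disagreements (in_arcs E \<omega>) km km' = {}" "disagreements (out_arcs E \<omega>) kp kp' = {}"
    by fast
  then show ?case
  proof cases
    case in_diff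
    with adm adm' obtain i j where v: "v \<in> V" and ij: "i < half_deg v" "j < half_deg v" "i \<noteq> j"
      and less: "card (disagreements (in_arcs E \<omega>) (km(v := km v \<circ> transpose (in_arc \<omega> km kp v i) (in_arc \<omega> km kp v j))) km')
        < card (disagreements (in_arcs E \<omega>) km km')"
      by (rule in_label_transposition_step)
    have "admissible \<omega> (km(v := km v \<circ> transpose (in_arc \<omega> km kp v i) (in_arc \<omega> km kp v j))) kp"
      using in_arc_mem[OF adm v] ij by (intro admissible_transpose_in_labels[OF adm]) auto
    with less show ?thesis
      using less.hyps[OF _ _ adm'] weight_transpose_in_labels[OF adm alt p v ij] by simp
  next
    case out_diff
    with adm adm' obtain i j where v: "v \<in> V" and ij: "i < half_deg v" "j < half_deg v" "i \<noteq> j"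
      and less: "card (disagreements (out_arcs E \<omega>) (kp(v := kp v \<circ> transpose (out_arc \<omega> km kp v i) (out_arc \<omega> km kp v j))) kp')
        < card (disagreements (out_arcs E \<omega>) kp kp')"
      by (rule out_label_transposition_step)
    have "admissible \<omega> km (kp(v := kp v \<circ> transpose (out_arc \<omega> km kp v i) (out_arc \<omega> km kp v j)))"
      using out_arc_mem[OF adm v] ij by (intro admissible_transpose_out_labels[OF adm]) auto
    with less show ?thesis
      using less.hyps[OF _ _ adm'] weight_transpose_out_labels[OF adm alt p v ij] by simp
  next
    case agree
    then show ?thesis by (rule weight_cong_labels[OF adm adm'])
  qed
qed

end

section \<open>Changing the orientation\<close>

definition enumeration :: "'a set \<Rightarrow> 'a \<Rightarrow> nat" where
  "enumeration S = (SOME h. bij_betw h S {0..<card S})"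

lemma bij_betw_enumeration: "finite S \<Longrightarrow> bij_betw (enumeration S) S {0..<card S}"
  unfolding enumeration_def by (rule someI_ex[OF ex_bij_betw_finite_nat])

lemma bij_betw_block_labels:
  fixes d r c :: nat and f g :: "'a \<Rightarrow> nat"
  assumes f: "bij_betw f P {0..<d}" and g: "bij_betw g Q {0..<r}" and "P \<subseteq> D" "Q \<inter> D = {}"
  shows "bij_betw (\<lambda>e. if e \<in> D then 2 * f e + c else 2 * (d + g e) + c) (P \<union> Q) ((\<lambda>j. 2*j + c) ` {..<d+r})"
proof -
  define h where "h = (\<lambda>e. if e \<in> D then f e else d + g e)"
  have "bij_betw h P {0..<d}"
    using f by (rule bij_betw_cong[THEN iffD1, rotated]) (use assms(3) in \<open>auto simp: h_def\<close>)
  moreover have "bij_betw h Q {d..<d+r}"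
  proof -
    have "bij_betw (\<lambda>x. d + x) {0..<r} {d..<d+r}"
      by (rule bij_betw_imageI) (auto simp: inj_on_def image_iff intro!: exI[where x="_ - d"])
    then have "bij_betw ((\<lambda>x. d + x) \<circ> g) Q {d..<d+r}" by (rule bij_betw_trans[OF g])
    then show ?thesis by (rule bij_betw_cong[THEN iffD1, rotated]) (use assms(4) in \<open>auto simp: h_def\<close>)
  qed
  ultimately have "bij_betw h (P \<union> Q) ({0..<d} \<union> {d..<d+r})"
    by (rule bij_betw_combine) auto
  moreover have "{0..<d} \<union> {d..<d+r} = {..<d+r}" by auto
  ultimately have "bij_betw h (P \<union> Q) {..<d+r}" by simp
  moreover have "bij_betw (\<lambda>j. 2*j+c) {..<d+r} ((\<lambda>j. 2*j + c) ` {..<d+r})"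
    by (rule bij_betw_imageI) (auto simp: inj_on_def)
  ultimately have "bij_betw ((\<lambda>j. 2*j+c) \<circ> h) (P \<union> Q) ((\<lambda>j. 2*j + c) ` {..<d+r})"
    by (rule bij_betw_trans)
  moreover have "(\<lambda>j. 2*j+c) \<circ> h = (\<lambda>e. if e \<in> D then 2 * f e + c else 2 * (d + g e) + c)"
    by (auto simp: h_def)
  ultimately show ?thesis by simp
qed

locale two_orientations = eulerian_graph V E ends
  for V :: "'v set" and E :: "'e set" and ends :: "'e \<Rightarrow> 'v \<times> 'v" +
  fixes \<omega>1 \<omega>2 :: "'e \<Rightarrow> 'v \<times> 'v" and km1 kp1 km2 kp2 :: "'v \<Rightarrow> 'e \<Rightarrow> nat"
  assumes adm1: "admissible \<omega>1 km1 kp1" and adm2: "admissible \<omega>2 km2 kp2"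
begin

definition reversed :: "'e set" where "reversed = {e\<in>E. \<omega>1 e \<noteq> \<omega>2 e}"

definition rev_in :: "'v \<Rightarrow> 'e set" where "rev_in v = {e\<in>reversed. snd (\<omega>1 e) = v}"
definition rev_out :: "'v \<Rightarrow> 'e set" where "rev_out v = {e\<in>reversed. fst (\<omega>1 e) = v}"
definition kept_in :: "'v \<Rightarrow> 'e set" where "kept_in v = {e\<in>E - reversed. snd (\<omega>1 e) = v}"
definition kept_out :: "'v \<Rightarrow> 'e set" where "kept_out v = {e\<in>E - reversed. fst (\<omega>1 e) = v}"

abbreviation n_rev :: "'v \<Rightarrow> nat" where "n_rev v \<equiv> card (rev_in v)"

text \<open>Canonical orderings: at each vertex the reversed arcs get the smallest labels, and an arc
  reversed from entering to leaving v (or vice versa) keeps its rank. The two canonical orderings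
  then only differ by exchanging, in each of the first n_rev v pairs, the entering and the
  leaving arc.\<close>
definition can_in1 :: "'v \<Rightarrow> 'e \<Rightarrow> nat" where
  "can_in1 v e = (if e \<in> reversed then 2 * enumeration (rev_in v) e + 1
                  else 2 * (n_rev v + enumeration (kept_in v) e) + 1)"
definition can_out1 :: "'v \<Rightarrow> 'e \<Rightarrow> nat" where
  "can_out1 v e = (if e \<in> reversed then 2 * enumeration (rev_out v) e + 2
                   else 2 * (n_rev v + enumeration (kept_out v) e) + 2)"
definition can_in2 :: "'v \<Rightarrow> 'e \<Rightarrow> nat" where
  "can_in2 v e = (if e \<in> reversed then 2 * enumeration (rev_out v) e + 1
                  else 2 * (n_rev v + enumeration (kept_in v) e) + 1)"
definition can_out2 :: "'v \<Rightarrow> 'e \<Rightarrow> nat" where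
  "can_out2 v e = (if e \<in> reversed then 2 * enumeration (rev_in v) e + 2
                   else 2 * (n_rev v + enumeration (kept_out v) e) + 2)"

lemma reversed_subset: "reversed \<subseteq> E"
  unfolding reversed_def by auto

lemma rev_subset: "rev_in v \<subseteq> reversed" "rev_out v \<subseteq> reversed"
  and kept_disjoint: "kept_in v \<inter> reversed = {}" "kept_out v \<inter> reversed = {}"
  unfolding rev_in_def rev_out_def kept_in_def kept_out_def by auto

lemma orient2_reversed: "e \<in> reversed \<Longrightarrow> \<omega>2 e = prod.swap (\<omega>1 e)"
  using adm1 adm2 unfolding reversed_def admissible_def eulerian_orientation_def orientation_def
  by (cases "ends e") fastforce

lemma orient2_kept: "e \<in> E \<Longrightarrow> e \<notin> reversed \<Longrightarrow> \<omega>2 e = \<omega>1 e"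
  unfolding reversed_def by auto

lemma in_arcs1: "in_arcs E \<omega>1 v = rev_in v \<union> kept_in v"
  and out_arcs1: "out_arcs E \<omega>1 v = rev_out v \<union> kept_out v"
  unfolding in_arcs_def out_arcs_def rev_in_def rev_out_def kept_in_def kept_out_def
  using reversed_subset by auto

lemma in_arcs2: "in_arcs E \<omega>2 v = rev_out v \<union> kept_in v"
proof -
  have "e \<in> in_arcs E \<omega>2 v \<longleftrightarrow> e \<in> rev_out v \<union> kept_in v" for e
  proof (cases "e \<in> reversed")
    case True
    then show ?thesis using reversed_subset orient2_reversed[OF True]
      unfolding in_arcs_def rev_out_def kept_in_def by (cases "\<omega>1 e") auto
  next
    case False
    then show ?thesis using orient2_kept[OF _ False] unfolding in_arcs_def rev_out_def kept_in_def by auto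
  qed
  then show ?thesis by blast
qed

lemma out_arcs2: "out_arcs E \<omega>2 v = rev_in v \<union> kept_out v"
proof -
  have "e \<in> out_arcs E \<omega>2 v \<longleftrightarrow> e \<in> rev_in v \<union> kept_out v" for e
  proof (cases "e \<in> reversed")
    case True
    then show ?thesis using reversed_subset orient2_reversed[OF True]
      unfolding out_arcs_def rev_in_def kept_out_def by (cases "\<omega>1 e") auto
  next
    case False
    then show ?thesis using orient2_kept[OF _ False] unfolding out_arcs_def rev_in_def kept_out_def by auto
  qed
  then show ?thesis by blast
qed

lemma finite_rev_kept: "finite (rev_in v)" "finite (rev_out v)" "finite (kept_in v)" "finite (kept_out v)"
  unfolding rev_in_def rev_out_def kept_in_def kept_out_def
  using reversed_subset by (auto intro: finite_subset[OF _ finite_E])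

lemma disjoint_rev_kept:
  "rev_in v \<inter> kept_in v = {}" "rev_out v \<inter> kept_out v = {}"
  "rev_out v \<inter> kept_in v = {}" "rev_in v \<inter> kept_out v = {}"
  unfolding rev_in_def rev_out_def kept_in_def kept_out_def by auto

lemma card_rev_kept:
  assumes v: "v \<in> V"
  shows "card (rev_out v) = n_rev v" "card (kept_out v) = card (kept_in v)"
    "half_deg v = n_rev v + card (kept_in v)"
proof -
  have "card (in_arcs E \<omega>1 v) = card (out_arcs E \<omega>1 v)" "card (in_arcs E \<omega>2 v) = card (out_arcs E \<omega>2 v)"
    using adm1 adm2 v unfolding admissible_def eulerian_orientation_def by auto
  moreover have "card (in_arcs E \<omega>1 v) = half_deg v"
    using bij_betw_same_card[OF bij_betw_in_arc[OF adm1 v]] by simp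
  ultimately show "card (rev_out v) = n_rev v" "card (kept_out v) = card (kept_in v)"
    "half_deg v = n_rev v + card (kept_in v)"
    unfolding in_arcs1 out_arcs1 in_arcs2 out_arcs2
    using finite_rev_kept disjoint_rev_kept by (simp_all add: card_Un_disjoint)
qed

lemma label_sets:
  assumes v: "v \<in> V"
  shows "{i. odd i \<and> i < deg E ends v} = (\<lambda>j. 2*j+1) ` {..<n_rev v + card (kept_in v)}"
    "{i. even i \<and> 2 \<le> i \<and> i \<le> deg E ends v} = (\<lambda>j. 2*j+2) ` {..<n_rev v + card (kept_in v)}"
  unfolding odd_less_eq_image[OF even_deg[OF v]] even_between_eq_image[OF even_deg[OF v]]
    card_rev_kept(3)[OF v] by simp_all

lemma admissible_can1: "admissible \<omega>1 can_in1 can_out1"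
  unfolding admissible_def compatible_ordering_def
proof (intro conjI ballI)
  show "eulerian_orientation V E ends \<omega>1" using adm1 unfolding admissible_def by simp
next
  fix v assume v: "v \<in> V"
  show "bij_betw (can_in1 v) (in_arcs E \<omega>1 v) {i. odd i \<and> i < deg E ends v}"
    unfolding in_arcs1 label_sets[OF v] can_in1_def[abs_def]
    using bij_betw_block_labels[OF bij_betw_enumeration[OF finite_rev_kept(1)[of v]]
        bij_betw_enumeration[OF finite_rev_kept(3)[of v]] rev_subset(1) kept_disjoint(1), where c = 1]
    by simp
  show "bij_betw (can_out1 v) (out_arcs E \<omega>1 v) {i. even i \<and> 2 \<le> i \<and> i \<le> deg E ends v}"
    unfolding out_arcs1 label_sets[OF v] can_out1_def[abs_def]
    using bij_betw_block_labels[OF bij_betw_enumeration[OF finite_rev_kept(2)[of v], unfolded card_rev_kept(1)[OF v]]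
        bij_betw_enumeration[OF finite_rev_kept(4)[of v], unfolded card_rev_kept(2)[OF v]] rev_subset(2) kept_disjoint(2), where c = 2]
    by simp
qed

lemma admissible_can2: "admissible \<omega>2 can_in2 can_out2"
  unfolding admissible_def compatible_ordering_def
proof (intro conjI ballI)
  show "eulerian_orientation V E ends \<omega>2" using adm2 unfolding admissible_def by simp
next
  fix v assume v: "v \<in> V"
  show "bij_betw (can_in2 v) (in_arcs E \<omega>2 v) {i. odd i \<and> i < deg E ends v}"
    unfolding in_arcs2 label_sets[OF v] can_in2_def[abs_def]
    using bij_betw_block_labels[OF bij_betw_enumeration[OF finite_rev_kept(2)[of v], unfolded card_rev_kept(1)[OF v]]
        bij_betw_enumeration[OF finite_rev_kept(3)[of v]] rev_subset(2) kept_disjoint(1), where c = 1]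
    by simp
  show "bij_betw (can_out2 v) (out_arcs E \<omega>2 v) {i. even i \<and> 2 \<le> i \<and> i \<le> deg E ends v}"
    unfolding out_arcs2 label_sets[OF v] can_out2_def[abs_def]
    using bij_betw_block_labels[OF bij_betw_enumeration[OF finite_rev_kept(1)[of v]]
        bij_betw_enumeration[OF finite_rev_kept(4)[of v], unfolded card_rev_kept(2)[OF v]] rev_subset(1) kept_disjoint(2), where c = 2]
    by simp
qed


abbreviation next1 :: "'e \<Rightarrow> 'e" where "next1 \<equiv> next_arc E \<omega>1 can_in1 can_out1"
abbreviation next2 :: "'e \<Rightarrow> 'e" where "next2 \<equiv> next_arc E \<omega>2 can_in2 can_out2"

lemma canonical_labels:
  assumes v: "v \<in> V"
  shows "e \<in> rev_in v \<Longrightarrow> can_in1 v e = 2 * enumeration (rev_in v) e + 1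
      \<and> can_out2 v e = 2 * enumeration (rev_in v) e + 2 \<and> enumeration (rev_in v) e < n_rev v"
    "e \<in> rev_out v \<Longrightarrow> can_out1 v e = 2 * enumeration (rev_out v) e + 2
      \<and> can_in2 v e = 2 * enumeration (rev_out v) e + 1 \<and> enumeration (rev_out v) e < n_rev v"
    "e \<in> kept_in v \<Longrightarrow> can_in1 v e = 2 * (n_rev v + enumeration (kept_in v) e) + 1
      \<and> can_in2 v e = 2 * (n_rev v + enumeration (kept_in v) e) + 1"
    "e \<in> kept_out v \<Longrightarrow> can_out1 v e = 2 * (n_rev v + enumeration (kept_out v) e) + 2
      \<and> can_out2 v e = 2 * (n_rev v + enumeration (kept_out v) e) + 2"
  using rev_subset[of v] kept_disjoint[of v] bij_betw_apply[OF bij_betw_enumeration[OF finite_rev_kept(1)[of v]]]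
    bij_betw_apply[OF bij_betw_enumeration[OF finite_rev_kept(2)[of v]]] card_rev_kept(1)[OF v]
  unfolding can_in1_def can_out1_def can_in2_def can_out2_def by auto

lemma next_reversed:
  assumes e: "e \<in> reversed"
  shows "next1 e \<in> reversed \<and> next2 (next1 e) = e"
proof -
  have eE: "e \<in> E" using e reversed_subset by auto
  define v where "v = snd (\<omega>1 e)"
  have v: "v \<in> V" unfolding v_def using head_in_V[OF admissible_can1 eE] .
  have e_in: "e \<in> rev_in v" unfolding rev_in_def v_def using e by auto
  have next1: "next1 e \<in> rev_out v \<union> kept_out v" "can_out1 v (next1 e) = can_in1 v e + 1"
    using next_arc_mem[OF admissible_can1 eE] unfolding v_def[symmetric] out_arcs1 by auto
  have "next1 e \<notin> kept_out v"
    using canonical_labels(1,4)[OF v] e_in next1(2) by force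
  then have next1_rev: "next1 e \<in> rev_out v" using next1(1) by blast
  have "snd (\<omega>2 (next1 e)) = v" using orient2_reversed next1_rev rev_subset unfolding rev_out_def by auto
  moreover have "next2 (next1 e) = e"
  proof (rule next_arc_eqI[OF admissible_can2])
    show "next1 e \<in> E" using next1_rev rev_subset reversed_subset by blast
    show "e \<in> out_arcs E \<omega>2 (snd (\<omega>2 (next1 e)))" unfolding calculation out_arcs2 using e_in by simp
    show "can_out2 (snd (\<omega>2 (next1 e))) e = can_in2 (snd (\<omega>2 (next1 e))) (next1 e) + 1"
      unfolding calculation using canonical_labels(1,2)[OF v] e_in next1_rev next1(2) by simp
  qed
  ultimately show ?thesis using next1_rev rev_subset by blast
qed

lemma next_kept:
  assumes e: "e \<in> E - reversed"
  shows "next1 e \<in> E - reversed \<and> next2 e = next1 e"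
proof -
  have eE: "e \<in> E" using e by auto
  define v where "v = snd (\<omega>1 e)"
  have v: "v \<in> V" unfolding v_def using head_in_V[OF admissible_can1 eE] .
  have e_in: "e \<in> kept_in v" unfolding kept_in_def v_def using e by auto
  have next1: "next1 e \<in> rev_out v \<union> kept_out v" "can_out1 v (next1 e) = can_in1 v e + 1"
    using next_arc_mem[OF admissible_can1 eE] unfolding v_def[symmetric] out_arcs1 by auto
  have "next1 e \<notin> rev_out v"
    using canonical_labels(2,3)[OF v] e_in next1(2) by force
  then have next1_kept: "next1 e \<in> kept_out v" using next1(1) by blast
  have head: "snd (\<omega>2 e) = v" using orient2_kept[OF eE] e unfolding v_def by auto
  have "next2 e = next1 e"
  proof (rule next_arc_eqI[OF admissible_can2 eE])
    show "next1 e \<in> out_arcs E \<omega>2 (snd (\<omega>2 e))" unfolding head out_arcs2 using next1_kept by simp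
    show "can_out2 (snd (\<omega>2 e)) (next1 e) = can_in2 (snd (\<omega>2 e)) e + 1"
      unfolding head using canonical_labels(3,4)[OF v] e_in next1_kept next1(2) by simp
  qed
  moreover have "next1 e \<in> E - reversed" using next1_kept unfolding kept_out_def by auto
  ultimately show ?thesis by simp
qed

text \<open>On the reversed arcs the two successor maps are inverse to each other (each circuit is
  traversed backwards), on the other arcs they coincide; either way the circuits are the same.\<close>
lemma num_circuits_canonical: "num_circuits E \<omega>1 can_in1 can_out1 = num_circuits E \<omega>2 can_in2 can_out2"
proof -
  have "orbit_from next1 a = orbit_from next2 a" if a: "a \<in> E" for a
  proof (cases "a \<in> reversed")
    case True
    show ?thesis
    proof (rule orbit_from_left_inverse[OF finite_subset[OF reversed_subset finite_E] _ _ True])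
      show "next1 ` reversed \<subseteq> reversed" using next_reversed by blast
      show "\<forall>x\<in>reversed. next2 (next1 x) = x" using next_reversed by blast
    qed
  next
    case False
    show ?thesis
    proof (rule orbit_from_cong_on[of "E - reversed"])
      show "\<forall>x\<in>E - reversed. next1 x = next2 x" using next_kept by simp
      show "next1 ` (E - reversed) \<subseteq> E - reversed" using next_kept by blast
    qed (use a False in simp)
  qed
  then have "orbit_from next1 ` E = orbit_from next2 ` E" by (rule image_cong[OF refl])
  then show ?thesis unfolding num_circuits_def circuits_eq_orbits by simp
qed


text \<open>Reversing an arc moves it between the e- and the f-slots at both of its ends; since
  f_i = \<plusminus>e_(i\<plusminus>l), shifting its colour by l compensates up to a sign.\<close>
definition flip_reversed :: "nat \<Rightarrow> ('e \<Rightarrow> nat) \<Rightarrow> 'e \<Rightarrow> nat" where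
  "flip_reversed l p e = (if e \<in> reversed then f_idx l (p e) else p e)"

lemma canonical_arcs_reversed:
  assumes v: "v \<in> V" and j: "j < n_rev v"
  shows "in_arc \<omega>2 can_in2 can_out2 v j = out_arc \<omega>1 can_in1 can_out1 v j"
    and "out_arc \<omega>2 can_in2 can_out2 v j = in_arc \<omega>1 can_in1 can_out1 v j"
    and "in_arc \<omega>1 can_in1 can_out1 v j \<in> reversed" "out_arc \<omega>1 can_in1 can_out1 v j \<in> reversed"
proof -
  have jm: "j < half_deg v" using j card_rev_kept(3)[OF v] by simp
  have out1: "out_arc \<omega>1 can_in1 can_out1 v j \<in> rev_out v"
    using out_arc_mem[OF admissible_can1 v jm] canonical_labels(4)[OF v] j unfolding out_arcs1 by force
  have in1: "in_arc \<omega>1 can_in1 can_out1 v j \<in> rev_in v"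
    using in_arc_mem[OF admissible_can1 v jm] canonical_labels(3)[OF v] j unfolding in_arcs1 by force
  show "in_arc \<omega>2 can_in2 can_out2 v j = out_arc \<omega>1 can_in1 can_out1 v j"
    using out1 out_arc_mem[OF admissible_can1 v jm] canonical_labels(2)[OF v out1]
    by (intro in_arc_eqI[OF admissible_can2 v]) (auto simp: in_arcs2)
  show "out_arc \<omega>2 can_in2 can_out2 v j = in_arc \<omega>1 can_in1 can_out1 v j"
    using in1 in_arc_mem[OF admissible_can1 v jm] canonical_labels(1)[OF v in1]
    by (intro out_arc_eqI[OF admissible_can2 v]) (auto simp: out_arcs2)
  show "in_arc \<omega>1 can_in1 can_out1 v j \<in> reversed" "out_arc \<omega>1 can_in1 can_out1 v j \<in> reversed"
    using in1 out1 rev_subset by blast+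
qed

lemma canonical_arcs_kept:
  assumes v: "v \<in> V" and j: "n_rev v \<le> j" "j < half_deg v"
  shows "in_arc \<omega>2 can_in2 can_out2 v j = in_arc \<omega>1 can_in1 can_out1 v j"
    and "out_arc \<omega>2 can_in2 can_out2 v j = out_arc \<omega>1 can_in1 can_out1 v j"
    and "in_arc \<omega>1 can_in1 can_out1 v j \<notin> reversed" "out_arc \<omega>1 can_in1 can_out1 v j \<notin> reversed"
proof -
  have out1: "out_arc \<omega>1 can_in1 can_out1 v j \<in> kept_out v"
    using out_arc_mem[OF admissible_can1 v j(2)] canonical_labels(2)[OF v] j unfolding out_arcs1 by force
  have in1: "in_arc \<omega>1 can_in1 can_out1 v j \<in> kept_in v"
    using in_arc_mem[OF admissible_can1 v j(2)] canonical_labels(1)[OF v] j unfolding in_arcs1 by force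
  show "in_arc \<omega>2 can_in2 can_out2 v j = in_arc \<omega>1 can_in1 can_out1 v j"
    using in1 in_arc_mem[OF admissible_can1 v j(2)] canonical_labels(3)[OF v in1]
    by (intro in_arc_eqI[OF admissible_can2 v]) (auto simp: in_arcs2)
  show "out_arc \<omega>2 can_in2 can_out2 v j = out_arc \<omega>1 can_in1 can_out1 v j"
    using out1 out_arc_mem[OF admissible_can1 v j(2)] canonical_labels(4)[OF v out1]
    by (intro out_arc_eqI[OF admissible_can2 v]) (auto simp: out_arcs2)
  show "in_arc \<omega>1 can_in1 can_out1 v j \<notin> reversed" "out_arc \<omega>1 can_in1 can_out1 v j \<notin> reversed"
    using in1 out1 kept_disjoint by blast+
qed


lemma form_canonical_flip:
  assumes alt: "alt_elem l H" and p: "\<forall>e\<in>E. p e \<in> {1..2*l}" and v: "v \<in> V"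
  shows "H (form_args l \<omega>2 can_in2 can_out2 (flip_reversed l p) v)
    = (-1) ^ n_rev v * H (form_args l \<omega>1 can_in1 can_out1 p v)"
proof -
  let ?A = "\<lambda>j. p (in_arc \<omega>1 can_in1 can_out1 v j)"
  let ?B = "\<lambda>j. f_idx l (p (out_arc \<omega>1 can_in1 can_out1 v j))"
  have range: "?A j \<in> {1..2*l} \<and> ?B j \<in> {1..2*l}" if "j < half_deg v" for j
    using p f_idx_range in_arc_in_E[OF admissible_can1 v that] out_arc_in_E[OF admissible_can1 v that]
    by blast
  have "form_args l \<omega>2 can_in2 can_out2 (flip_reversed l p) v =
     interleave (\<lambda>j. if j < n_rev v then ?B j else ?A j) (\<lambda>j. if j < n_rev v then ?A j else ?B j) (half_deg v)"
    unfolding form_args_def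
  proof (rule interleave_cong)
    fix j assume j: "j < half_deg v"
    show "flip_reversed l p (in_arc \<omega>2 can_in2 can_out2 v j) = (if j < n_rev v then ?B j else ?A j)"
      using canonical_arcs_reversed[OF v] canonical_arcs_kept[OF v _ j]
      unfolding flip_reversed_def by (cases "j < n_rev v") simp_all
    show "f_idx l (flip_reversed l p (out_arc \<omega>2 can_in2 can_out2 v j)) = (if j < n_rev v then ?A j else ?B j)"
      using canonical_arcs_reversed[OF v] canonical_arcs_kept[OF v _ j] f_idx_involutive range[OF j]
      unfolding flip_reversed_def by (cases "j < n_rev v") simp_all
  qed
  moreover have "n_rev v \<le> half_deg v" using card_rev_kept(3)[OF v] by simp
  ultimately show ?thesis
    using alt_elem_interleave_exchange[OF alt range] unfolding form_args_def by simp
qed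

lemma sum_n_rev: "(\<Sum>v\<in>V. n_rev v) = card reversed"
proof -
  have "(\<Sum>v\<in>V. n_rev v) = (\<Sum>v\<in>V. \<Sum>e\<in>{e\<in>reversed. snd (\<omega>1 e) = v}. 1)"
    unfolding rev_in_def by simp
  also have "\<dots> = (\<Sum>e\<in>reversed. 1)"
    by (rule sum.group[OF finite_subset[OF reversed_subset finite_E] finite_V])
      (use reversed_subset head_in_V[OF adm1] in auto)
  finally show ?thesis by simp
qed

text \<open>Both the edge signs and the vertex forms pick up the factor (-1)^|reversed|.\<close>
lemma weight_canonical_flip:
  assumes alt: "alt_elem l H" and p: "\<forall>e\<in>E. p e \<in> {1..2*l}"
  shows "weight l H \<omega>2 can_in2 can_out2 (flip_reversed l p) = weight l H \<omega>1 can_in1 can_out1 p"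
proof -
  have "(\<Prod>e\<in>E. f_sgn l (flip_reversed l p e)) = (\<Prod>e\<in>E. (if e \<in> reversed then -1 else 1) * f_sgn l (p e))"
    using p f_sgn_f_idx unfolding flip_reversed_def by (intro prod.cong) auto
  also have "\<dots> = (\<Prod>e\<in>reversed. -1) * (\<Prod>e\<in>E. f_sgn l (p e))"
    unfolding prod.distrib prod.inter_restrict[OF finite_E, symmetric]
    using reversed_subset by (simp add: Int_absorb1)
  finally have signs: "(\<Prod>e\<in>E. f_sgn l (flip_reversed l p e)) = (-1) ^ card reversed * (\<Prod>e\<in>E. f_sgn l (p e))"
    by simp
  have "(\<Prod>v\<in>V. H (form_args l \<omega>2 can_in2 can_out2 (flip_reversed l p) v))
      = (\<Prod>v\<in>V. (-1) ^ n_rev v * H (form_args l \<omega>1 can_in1 can_out1 p v))"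
    using form_canonical_flip[OF alt p] by (intro prod.cong) auto
  also have "\<dots> = (-1) ^ card reversed * (\<Prod>v\<in>V. H (form_args l \<omega>1 can_in1 can_out1 p v))"
    unfolding prod.distrib sum_n_rev[symmetric] power_sum ..
  finally have forms: "(\<Prod>v\<in>V. H (form_args l \<omega>2 can_in2 can_out2 (flip_reversed l p) v))
      = (-1) ^ card reversed * (\<Prod>v\<in>V. H (form_args l \<omega>1 can_in1 can_out1 p v))" .
  have "(-1::complex) ^ card reversed * (-1) ^ card reversed = 1" by (simp add: power_add[symmetric])
  then show ?thesis
    unfolding weight_eq[OF admissible_can1] weight_eq[OF admissible_can2] num_circuits_canonical signs forms
    by (simp add: algebra_simps)
qed

lemma weight_transfer:
  assumes alt: "alt_elem l H" and p: "\<forall>e\<in>E. p e \<in> {1..2*l}"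
  shows "weight l H \<omega>1 km1 kp1 p = weight l H \<omega>2 km2 kp2 (flip_reversed l p)"
proof -
  have "\<forall>e\<in>E. flip_reversed l p e \<in> {1..2*l}"
    using p f_idx_range unfolding flip_reversed_def by auto
  then show ?thesis
    using weight_indep_ordering[OF alt p adm1 admissible_can1]
      weight_indep_ordering[OF alt _ admissible_can2 adm2] weight_canonical_flip[OF alt p] by simp
qed

lemma s_phi_eq:
  assumes alt: "alt_elem l H" and \<phi>: "\<forall>e\<in>E. \<phi> e \<in> {1..l}"
  shows "s_phi l H V E ends \<phi> \<omega>1 km1 kp1 = s_phi l H V E ends \<phi> \<omega>2 km2 kp2"
proof -
  let ?P = "PiE E (\<lambda>_. {0, l})"
  define shift where "shift \<psi> e = (if e \<in> reversed then l - \<psi> e else \<psi> e)" for \<psi> :: "'e \<Rightarrow> nat" and e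
  have shift: "shift \<psi> \<in> ?P" "shift (shift \<psi>) = \<psi>"
    "flip_reversed l (\<lambda>e. \<phi> e + \<psi> e) = (\<lambda>e. \<phi> e + shift \<psi> e)" if "\<psi> \<in> ?P" for \<psi>
  proof -
    have vals: "(\<psi> e = 0 \<or> \<psi> e = l) \<and> 1 \<le> \<phi> e \<and> \<phi> e \<le> l" if "e \<in> reversed" for e
      using \<open>\<psi> \<in> ?P\<close> \<phi> reversed_subset that by (auto simp: PiE_iff)
    show "shift \<psi> \<in> ?P" using that reversed_subset by (auto simp: PiE_iff extensional_def shift_def)
    show "shift (shift \<psi>) = \<psi>" using vals by (force simp: shift_def fun_eq_iff)
    show "flip_reversed l (\<lambda>e. \<phi> e + \<psi> e) = (\<lambda>e. \<phi> e + shift \<psi> e)"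
      using vals by (force simp: shift_def flip_reversed_def f_idx_def fun_eq_iff)
  qed
  have "s_phi l H V E ends \<phi> \<omega>1 km1 kp1 = (\<Sum>\<psi>\<in>?P. weight l H \<omega>2 km2 kp2 (\<lambda>e. \<phi> e + shift \<psi> e))"
  proof (unfold s_phi_eq_sum_weight, rule sum.cong[OF refl])
    fix \<psi> assume \<psi>: "\<psi> \<in> ?P"
    have "\<forall>e\<in>E. \<phi> e + \<psi> e \<in> {1..2*l}" using \<psi> \<phi> by (force simp: PiE_iff)
    then show "weight l H \<omega>1 km1 kp1 (\<lambda>e. \<phi> e + \<psi> e) = weight l H \<omega>2 km2 kp2 (\<lambda>e. \<phi> e + shift \<psi> e)"
      using weight_transfer[OF alt] shift(3)[OF \<psi>] by simp
  qed
  also have "\<dots> = (\<Sum>\<psi>\<in>?P. weight l H \<omega>2 km2 kp2 (\<lambda>e. \<phi> e + \<psi> e))"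
    by (rule sum.reindex_bij_witness[where i = shift and j = shift]) (use shift in auto)
  finally show ?thesis unfolding s_phi_eq_sum_weight .
qed

lemma s_h_eq:
  assumes alt: "alt_elem l H"
  shows "s_h l H V E ends \<omega>1 km1 kp1 = s_h l H V E ends \<omega>2 km2 kp2"
proof -
  let ?Q = "PiE E (\<lambda>_. {1..2*l})"
  have flip: "flip_reversed l p \<in> ?Q" "flip_reversed l (flip_reversed l p) = p" if "p \<in> ?Q" for p
    using that reversed_subset f_idx_range f_idx_involutive
    by (auto simp: PiE_iff extensional_def flip_reversed_def fun_eq_iff)
  have "s_h l H V E ends \<omega>1 km1 kp1 = (\<Sum>p\<in>?Q. weight l H \<omega>2 km2 kp2 (flip_reversed l p))"
    unfolding s_h_eq_sum_weight by (intro sum.cong refl weight_transfer[OF alt]) (auto simp: PiE_iff)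
  also have "\<dots> = (\<Sum>p\<in>?Q. weight l H \<omega>2 km2 kp2 p)"
    by (rule sum.reindex_bij_witness[where i = "flip_reversed l" and j = "flip_reversed l"]) (use flip in auto)
  finally show ?thesis unfolding s_h_eq_sum_weight .
qed

end

theorem lemma2:
  fixes l :: nat and H :: "nat list \<Rightarrow> complex"
    and V :: "'v set" and E :: "'e set" and ends :: "'e \<Rightarrow> 'v \<times> 'v"
    and \<phi> :: "'e \<Rightarrow> nat"
    and \<omega>1 \<omega>2 :: "'e \<Rightarrow> 'v \<times> 'v"
    and km1 kp1 km2 kp2 :: "'v \<Rightarrow> 'e \<Rightarrow> nat"
  assumes "alt_elem l H"
    and "graph V E ends" and "eulerian V E ends"
    and "\<forall>e\<in>E. \<phi> e \<in> {1..l}"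
    and "eulerian_orientation V E ends \<omega>1" and "compatible_ordering V E ends \<omega>1 km1 kp1"
    and "eulerian_orientation V E ends \<omega>2" and "compatible_ordering V E ends \<omega>2 km2 kp2"
  shows "s_phi l H V E ends \<phi> \<omega>1 km1 kp1 = s_phi l H V E ends \<phi> \<omega>2 km2 kp2
       \<and> s_h l H V E ends \<omega>1 km1 kp1 = s_h l H V E ends \<omega>2 km2 kp2"
proof -
  interpret eulerian_graph V E ends
    using assms(2,3) by unfold_locales
  interpret two_orientations V E ends \<omega>1 \<omega>2 km1 kp1 km2 kp2
    using assms(5-8) by unfold_locales (simp_all add: admissible_def)
  show ?thesis using s_phi_eq[OF assms(1,4)] s_h_eq[OF assms(1)] by simp
qed

end
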